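(* Let $N\ge2$, let $f\in C(\overline{B_1(0)})$ be $x_N$-odd with $f\ge0$ in $B_1^+(0)$, and let $g_1,g_2\in C^1(\mathbb{R})$ be odd and nondecreasing with $g_1(s)\le g_2(s)$ for all $s\ge0$. For $i=1,2$ let $w_{f,i}$ be the solution of $-\Delta u+g_i(u)=f$ in $B_1(0)$, $u=0$ on $\partial B_1(0)$. Then $|w_{f,1}(x)|\ge|w_{f,2}(x)|$ for all $x\in B_1(0)$.
   Context: $B_1(0)$ is the open unit ball in $\mathbb{R}^N$, $B_1^+(0)=\{x\in B_1(0):x_N>0\}$. A function $w$ is $x_N$-odd if $w(x',x_N)=-w(x',-x_N)$. *)

theory Defs
  imports "HOL-Analysis.Analysis"
begin

definition pd :: "'n::finite \<Rightarrow> (real^'n \<Rightarrow> real) \<Rightarrow> real^'n \<Rightarrow> real" where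
  "pd i \<phi> x = deriv (\<lambda>t. \<phi> (x + t *\<^sub>R axis i 1)) 0"

definition laplacian :: "(real^'n::finite \<Rightarrow> real) \<Rightarrow> real^'n \<Rightarrow> real" where
  "laplacian \<phi> x = (\<Sum>i\<in>UNIV. pd i (pd i \<phi>) x)"

definition test_fun :: "(real^'n::finite \<Rightarrow> real) \<Rightarrow> bool" where
  "test_fun \<phi> \<longleftrightarrow>
     continuous_on UNIV \<phi> \<and>
     (\<forall>i x. (\<lambda>t. \<phi> (x + t *\<^sub>R axis i 1)) differentiable (at 0)) \<and>
     (\<forall>i. continuous_on UNIV (pd i \<phi>)) \<and>
     (\<forall>i j x. (\<lambda>t. pd i \<phi> (x + t *\<^sub>R axis j 1)) differentiable (at 0)) \<and>
     (\<forall>i j. continuous_on UNIV (pd j (pd i \<phi>))) \<and>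
     compact (closure {x. \<phi> x \<noteq> 0}) \<and>
     closure {x. \<phi> x \<noteq> 0} \<subseteq> ball 0 1"

text \<open>u is a (continuous, distributional) solution of -\<Delta>u + g(u) = f in B_1(0), u = 0 on the
  boundary sphere.\<close>
definition dirichlet_solution ::
    "(real \<Rightarrow> real) \<Rightarrow> (real^'n::finite \<Rightarrow> real) \<Rightarrow> (real^'n \<Rightarrow> real) \<Rightarrow> bool" where
  "dirichlet_solution g f u \<longleftrightarrow>
     continuous_on (cball 0 1) u \<and>
     (\<forall>x\<in>sphere 0 1. u x = 0) \<and>
     (\<forall>\<phi>. test_fun \<phi> \<longrightarrow>
        integral (ball 0 1) (\<lambda>x. u x * (- laplacian \<phi> x) + g (u x) * \<phi> x)
        = integral (ball 0 1) (\<lambda>x. f x * \<phi> x))"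

text \<open>Reflection in the k-th coordinate (k plays the role of the last coordinate x_N).\<close>
definition reflect :: "'n::finite \<Rightarrow> real^'n \<Rightarrow> real^'n" where
  "reflect k x = (\<chi> i. if i = k then - (x $ i) else x $ i)"

end

theory Submission
  imports Defs
begin

(*
  Both solutions are odd in x_k: reflecting a solution gives another one, because f and g_i are
  odd, and solutions are unique by the comparison principle. On the upper half ball u_i >= 0, since
  Delta(-u_i) = f - g_i(u_i) >= 0 wherever u_i < 0; and u_2 <= u_1 there, since where u_2 > u_1
  we have g_2(u_2) >= g_1(u_2) >= g_1(u_1) (as u_2 >= 0), so that u_2 - u_1 is subharmonic.
  All three steps are instances of the weak maximum principle for continuous distributional
  subharmonic functions. It is proved with radial test functions whose Laplacian is positive on an
  annulus and negative on a small ball around the centre: if the maximum is attained at the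
  centre, it is attained on the whole annulus, which is impossible for the maximum point farthest
  from the origin.
*)

lemma integrable_continuous_compact:
  fixes f :: "'a::euclidean_space \<Rightarrow> real"
  assumes "compact S" "continuous_on S f"
  shows "f integrable_on S"
proof -
  have "(\<lambda>x. indicator S x *\<^sub>R f x) integrable_on UNIV"
    using borel_integrable_compact[OF assms] integrable_on_lborel by blast
  moreover have "(\<lambda>x. indicator S x *\<^sub>R f x) = (\<lambda>x. if x \<in> S then f x else 0)"
    by (auto simp: indicator_def)
  ultimately have "(\<lambda>x. if x \<in> S then f x else 0) integrable_on UNIV"
    by simp
  then show ?thesis
    by (simp only: integrable_restrict_UNIV)
qed

lemma integrable_continuous_ball:
  fixes h :: "'a::euclidean_space \<Rightarrow> real"
  assumes "continuous_on (cball a r) h"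
  shows "h integrable_on ball a r"
proof (rule integrable_spike_set[OF integrable_continuous_compact[OF compact_cball assms]])
  show "negligible {x \<in> cball a r - ball a r. h x \<noteq> 0}"
    by (rule negligible_subset[OF negligible_sphere[of a r]]) auto
  show "negligible {x \<in> ball a r - cball a r. h x \<noteq> 0}"
    by (simp add: Diff_eq_empty_iff[THEN iffD2, OF ball_subset_cball])
qed

lemma has_integral_cball_superset:
  fixes h :: "'a::euclidean_space \<Rightarrow> real"
  assumes "continuous_on (cball a r) h" "\<And>x. x \<notin> cball a r \<Longrightarrow> h x = 0" "cball a r \<subseteq> S"
  shows "(h has_integral integral (cball a r) h) S"
  using has_integral_on_superset integrable_integral[OF integrable_continuous_compact[OF compact_cball assms(1)]]
    assms(2,3) by blast

lemma integral_eq_0_imp_eq_0_ball: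
  fixes h :: "'a::euclidean_space \<Rightarrow> real"
  assumes "continuous_on (cball a r) h" "\<And>x. x \<in> cball a r \<Longrightarrow> h x \<ge> 0"
    and "integral (cball a r) h = 0" and y: "y \<in> ball a r"
  shows "h y = 0"
proof -
  obtain l u where lu: "cbox l u \<subseteq> ball a r" "y \<in> box l u"
    using open_contains_cbox[OF open_ball y] by metis
  have sub: "cbox l u \<subseteq> cball a r" using lu(1) ball_subset_cball by blast
  have cont_box: "continuous_on (cbox l u) h"
    using continuous_on_subset[OF assms(1) sub] .
  have nonneg_box: "0 \<le> h x" if "x \<in> box l u" for x
    using that sub box_subset_cbox assms(2) by blast
  have int_box: "h integrable_on cbox l u"
    using cont_box by (rule integrable_continuous)
  have "integral (cbox l u) h \<le> integral (cball a r) h"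
    using sub int_box integrable_continuous_compact[OF compact_cball assms(1)] assms(2)
    by (intro integral_subset_le) auto
  moreover have "integral (cbox l u) h \<ge> 0"
    using int_box assms(2) sub by (intro Henstock_Kurzweil_Integration.integral_nonneg) auto
  ultimately have zero: "(h has_integral 0) (cbox l u)"
    using assms(3) int_box by (metis order_antisym integrable_integral)
  show ?thesis
    by (rule has_integral_0_cbox_imp_0[OF cont_box _ zero]) (use lu(2) box_subset_cbox nonneg_box in auto)
qed

lemma nonpos_if_le_epsilon_mult:
  fixes x C :: real
  assumes "C \<ge> 0" "\<And>e. e > 0 \<Longrightarrow> x \<le> e * C"
  shows "x \<le> 0"
proof (rule field_le_epsilon)
  fix e :: real assume "e > 0"
  then have "e / (C + 1) > 0" using assms(1) by (simp add: add_nonneg_pos)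
  then have "x \<le> e / (C + 1) * C" using assms(2) by blast
  also have "\<dots> \<le> 0 + e" using \<open>e > 0\<close> assms(1) by (simp add: field_simps)
  finally show "x \<le> 0 + e" .
qed

lemma uniformly_continuous_on_compact_support:
  fixes h :: "'a::euclidean_space \<Rightarrow> real"
  assumes "continuous_on UNIV h" "\<And>x. x \<notin> cball c R \<Longrightarrow> h x = 0"
  shows "uniformly_continuous_on UNIV h"
  unfolding uniformly_continuous_on_def
proof (intro allI impI)
  fix e :: real assume "e > 0"
  have "uniformly_continuous_on (cball c (R + 1)) h"
    using continuous_on_subset[OF assms(1)] compact_cball by (rule compact_uniformly_continuous) simp
  then obtain d where d: "d > 0"
    and close: "\<And>x x'. x \<in> cball c (R + 1) \<Longrightarrow> x' \<in> cball c (R + 1) \<Longrightarrow> dist x' x < d \<Longrightarrow> dist (h x') (h x) < e"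
    using \<open>e > 0\<close> unfolding uniformly_continuous_on_def by metis
  show "\<exists>d>0. \<forall>x\<in>UNIV. \<forall>x'\<in>UNIV. dist x' x < d \<longrightarrow> dist (h x') (h x) < e"
  proof (intro exI[of _ "min d 1"] conjI ballI impI)
    fix x x' :: 'a assume dx: "dist x' x < min d 1"
    show "dist (h x') (h x) < e"
    proof (cases "x \<in> cball c (R + 1) \<and> x' \<in> cball c (R + 1)")
      case True
      moreover have "dist x' x < d" using dx by simp
      ultimately show ?thesis using close by blast
    next
      case False
      \<comment> \<open>one point lies outside the larger ball, so both lie outside the support\<close>
      have "dist x x' < 1" "dist x' x < 1" using dx by (simp_all add: dist_commute)
      moreover have "dist c x \<le> dist c x' + dist x' x" "dist c x' \<le> dist c x + dist x x'"
        by (rule dist_triangle)+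
      moreover have "dist c x > R + 1 \<or> dist c x' > R + 1" using False by auto
      ultimately have "dist c x > R" "dist c x' > R" by linarith+
      then show ?thesis using assms(2) \<open>e > 0\<close> by simp
    qed
  qed (use d in simp)
qed

section \<open>Radial test functions\<close>

lemma test_fun_continuous: "test_fun \<phi> \<Longrightarrow> continuous_on UNIV \<phi>"
  unfolding test_fun_def by blast

lemma continuous_on_laplacian: "test_fun \<phi> \<Longrightarrow> continuous_on UNIV (laplacian \<phi>)"
  unfolding test_fun_def laplacian_def[abs_def] by (intro continuous_on_sum) blast

lemma has_real_derivative_radial_line:
  fixes y :: "real^'n"
  assumes F: "\<And>z. (F has_real_derivative P z) (at z)"
  shows "((\<lambda>t. F ((y + t *\<^sub>R axis i 1) \<bullet> (y + t *\<^sub>R axis i 1))) has_real_derivative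
            P (y \<bullet> y) * (2 * y $ i)) (at 0)"
proof -
  have square: "(y + t *\<^sub>R axis i 1) \<bullet> (y + t *\<^sub>R axis i 1) = y \<bullet> y + 2 * t * y $ i + t^2" for t
    by (simp add: inner_add_left inner_add_right inner_axis axis_nth power2_eq_square inner_commute algebra_simps)
  have "((\<lambda>t. y \<bullet> y + 2 * t * y $ i + t^2) has_real_derivative 2 * y $ i) (at 0)"
    by (auto intro!: derivative_eq_intros)
  from DERIV_chain2[OF F this] show ?thesis
    by (simp add: square)
qed

lemma has_real_derivative_radial_coordinate:
  fixes y :: "real^'n"
  assumes P: "\<And>z. (P has_real_derivative P2 z) (at z)"
  shows "((\<lambda>t. 2 * (y + t *\<^sub>R axis j 1) $ i * P ((y + t *\<^sub>R axis j 1) \<bullet> (y + t *\<^sub>R axis j 1))) has_real_derivative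
            2 * (if i = j then 1 else 0) * P (y \<bullet> y) + 2 * y $ i * (P2 (y \<bullet> y) * (2 * y $ j))) (at 0)"
proof -
  have "((\<lambda>t. 2 * (y + t *\<^sub>R axis j 1) $ i) has_real_derivative 2 * (if i = j then 1 else 0)) (at 0)"
    by (auto simp: axis_def intro!: derivative_eq_intros)
  from DERIV_mult[OF this has_real_derivative_radial_line[OF P, of y j]] show ?thesis
    by (simp add: axis_def algebra_simps)
qed

lemma add_scaleR_minus_commute: "(x::'a::real_vector) + t *\<^sub>R e - c = (x - c) + t *\<^sub>R e"
  by (simp add: algebra_simps)

lemma pd_radial:
  fixes x0 :: "real^'n"
  assumes F: "\<And>z. (F has_real_derivative P z) (at z)"
  shows "pd i (\<lambda>x. F ((x - x0) \<bullet> (x - x0))) = (\<lambda>x. 2 * (x - x0) $ i * P ((x - x0) \<bullet> (x - x0)))"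
proof
  fix x
  have "((\<lambda>t. F ((x + t *\<^sub>R axis i 1 - x0) \<bullet> (x + t *\<^sub>R axis i 1 - x0))) has_real_derivative
            P ((x - x0) \<bullet> (x - x0)) * (2 * (x - x0) $ i)) (at 0)"
    unfolding add_scaleR_minus_commute by (rule has_real_derivative_radial_line[OF F])
  then show "pd i (\<lambda>x. F ((x - x0) \<bullet> (x - x0))) x = 2 * (x - x0) $ i * P ((x - x0) \<bullet> (x - x0))"
    unfolding pd_def by (simp add: DERIV_imp_deriv mult.commute)
qed

lemma pd_pd_radial:
  fixes x0 :: "real^'n"
  assumes P: "\<And>z. (P has_real_derivative P2 z) (at z)"
  shows "pd j (\<lambda>x. 2 * (x - x0) $ i * P ((x - x0) \<bullet> (x - x0))) =
     (\<lambda>x. 2 * (if i = j then 1 else 0) * P ((x - x0) \<bullet> (x - x0))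
          + 2 * (x - x0) $ i * (P2 ((x - x0) \<bullet> (x - x0)) * (2 * (x - x0) $ j)))"
proof
  fix x
  have "((\<lambda>t. 2 * (x + t *\<^sub>R axis j 1 - x0) $ i * P ((x + t *\<^sub>R axis j 1 - x0) \<bullet> (x + t *\<^sub>R axis j 1 - x0)))
          has_real_derivative 2 * (if i = j then 1 else 0) * P ((x - x0) \<bullet> (x - x0))
            + 2 * (x - x0) $ i * (P2 ((x - x0) \<bullet> (x - x0)) * (2 * (x - x0) $ j))) (at 0)"
    unfolding add_scaleR_minus_commute by (rule has_real_derivative_radial_coordinate[OF P])
  then show "pd j (\<lambda>x. 2 * (x - x0) $ i * P ((x - x0) \<bullet> (x - x0))) x =
      2 * (if i = j then 1 else 0) * P ((x - x0) \<bullet> (x - x0))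
        + 2 * (x - x0) $ i * (P2 ((x - x0) \<bullet> (x - x0)) * (2 * (x - x0) $ j))"
    unfolding pd_def by (simp add: DERIV_imp_deriv)
qed

lemma laplacian_radial:
  fixes x0 :: "real^'n"
  assumes F: "\<And>z. (F has_real_derivative P z) (at z)"
    and P: "\<And>z. (P has_real_derivative P2 z) (at z)"
  shows "laplacian (\<lambda>x. F ((x - x0) \<bullet> (x - x0))) x =
     2 * real CARD('n) * P ((x - x0) \<bullet> (x - x0)) + 4 * ((x - x0) \<bullet> (x - x0)) * P2 ((x - x0) \<bullet> (x - x0))"
proof -
  let ?y = "x - x0"
  have "laplacian (\<lambda>x. F ((x - x0) \<bullet> (x - x0))) x =
     (\<Sum>i\<in>UNIV. 2 * P (?y \<bullet> ?y) + 4 * P2 (?y \<bullet> ?y) * (?y $ i * ?y $ i))"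
    unfolding laplacian_def pd_radial[OF F] pd_pd_radial[OF P] by (simp add: algebra_simps)
  also have "\<dots> = 2 * real CARD('n) * P (?y \<bullet> ?y) + 4 * P2 (?y \<bullet> ?y) * (\<Sum>i\<in>UNIV. ?y $ i * ?y $ i)"
    by (simp add: sum.distrib sum_distrib_left)
  also have "(\<Sum>i\<in>UNIV. ?y $ i * ?y $ i) = ?y \<bullet> ?y"
    by (simp add: inner_vec_def)
  finally show ?thesis by simp
qed

lemma inner_diff_gt_if_notin_cball:
  fixes x x0 :: "real^'n"
  assumes "x \<notin> cball x0 r" "r > 0"
  shows "(x - x0) \<bullet> (x - x0) > r^2"
proof -
  have "norm (x - x0) > r" using assms(1) by (simp add: dist_norm norm_minus_commute)
  then have "norm (x - x0) ^ 2 > r ^ 2" using assms(2) by (simp add: power_strict_mono)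
  then show ?thesis by (simp add: power2_norm_eq_inner)
qed

lemma radial_test_fun:
  fixes x0 :: "real^'n"
  assumes F: "\<And>z. (F has_real_derivative P z) (at z)"
    and P: "\<And>z. (P has_real_derivative P2 z) (at z)"
    and P2: "continuous_on UNIV P2"
    and F_zero: "\<And>z. z \<ge> r^2 \<Longrightarrow> F z = 0"
    and r: "r > 0" "cball x0 r \<subseteq> ball 0 1"
  shows "test_fun (\<lambda>x. F ((x - x0) \<bullet> (x - x0)))"
    and "closure {x. F ((x - x0) \<bullet> (x - x0)) \<noteq> 0} \<subseteq> cball x0 r"
proof -
  have cont_F: "continuous_on UNIV F"
    using F by (meson DERIV_isCont continuous_at_imp_continuous_on)
  have cont_P: "continuous_on UNIV P"
    using P by (meson DERIV_isCont continuous_at_imp_continuous_on)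
  have cont_sq: "continuous_on UNIV (\<lambda>x::real^'n. (x - x0) \<bullet> (x - x0))"
    by (intro continuous_intros)
  have "{x. F ((x - x0) \<bullet> (x - x0)) \<noteq> 0} \<subseteq> cball x0 r"
    using F_zero inner_diff_gt_if_notin_cball[OF _ r(1)] by (force simp: less_imp_le)
  then show support: "closure {x. F ((x - x0) \<bullet> (x - x0)) \<noteq> 0} \<subseteq> cball x0 r"
    using closure_minimal closed_cball by blast
  show "test_fun (\<lambda>x. F ((x - x0) \<bullet> (x - x0)))"
    unfolding test_fun_def
  proof (intro conjI allI)
    show "continuous_on UNIV (\<lambda>x. F ((x - x0) \<bullet> (x - x0)))"
      using continuous_on_compose2[OF cont_F cont_sq] by simp
    fix i x
    show "(\<lambda>t. F ((x + t *\<^sub>R axis i 1 - x0) \<bullet> (x + t *\<^sub>R axis i 1 - x0))) differentiable at 0"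
      using has_real_derivative_radial_line[OF F, of "x - x0" i] unfolding add_scaleR_minus_commute
      by (auto simp: differentiable_def has_field_derivative_def)
  next
    fix i
    show "continuous_on UNIV (pd i (\<lambda>x. F ((x - x0) \<bullet> (x - x0))))"
      unfolding pd_radial[OF F] using continuous_on_compose2[OF cont_P cont_sq]
      by (intro continuous_intros) auto
  next
    fix i j x
    show "(\<lambda>t. pd i (\<lambda>x. F ((x - x0) \<bullet> (x - x0))) (x + t *\<^sub>R axis j 1)) differentiable at 0"
      unfolding pd_radial[OF F]
      using has_real_derivative_radial_coordinate[OF P, of "x - x0" j i] unfolding add_scaleR_minus_commute
      by (auto simp: differentiable_def has_field_derivative_def)
  next
    fix i j
    show "continuous_on UNIV (pd j (pd i (\<lambda>x. F ((x - x0) \<bullet> (x - x0)))))"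
      unfolding pd_radial[OF F] pd_pd_radial[OF P]
      using continuous_on_compose2[OF cont_P cont_sq] continuous_on_compose2[OF P2 cont_sq]
      by (intro continuous_intros) auto
  next
    show "compact (closure {x. F ((x - x0) \<bullet> (x - x0)) \<noteq> 0})"
      using support by (meson bounded_cball bounded_subset bounded_closure compact_eq_bounded_closed closed_closure)
    show "closure {x. F ((x - x0) \<bullet> (x - x0)) \<noteq> 0} \<subseteq> ball 0 1"
      using support r(2) by blast
  qed
qed

lemma has_integral_shift_compact_support:
  fixes G :: "'a::euclidean_space \<Rightarrow> real"
  assumes "continuous_on UNIV G" "\<And>x. x \<notin> cball c R \<Longrightarrow> G x = 0"
  shows "((\<lambda>x. G (x + v)) has_integral integral (cball c R) G) UNIV"
proof -
  obtain u where box: "cball c R \<subseteq> cbox (-u) u"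
    using bounded_subset_cbox_symmetric[OF bounded_cball] by blast
  have "(G has_integral integral (cball c R) G) (cbox (-u) u)"
    using has_integral_cball_superset[OF continuous_on_subset[OF assms(1)] assms(2) box] by simp
  then have shifted: "((\<lambda>x. G (x + v)) has_integral integral (cball c R) G) (cbox (-u - v) (u - v))"
    by (rule has_integral_shift_cbox)
  have outside: "G (x + v) = 0" if "x \<notin> cbox (-u - v) (u - v)" for x
  proof -
    have "x + v \<notin> cbox (-u) u"
      using that by (auto simp: mem_box algebra_simps)
    then show ?thesis using box assms(2) by blast
  qed
  show ?thesis
    using has_integral_on_superset[OF shifted outside subset_UNIV] .
qed

lemma has_real_derivative_along_axis:
  fixes G :: "real^'n \<Rightarrow> real"
  assumes "\<And>x. ((\<lambda>t. G (x + t *\<^sub>R axis i 1)) has_real_derivative D x) (at 0)"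
  shows "((\<lambda>t. G (x + t *\<^sub>R axis i 1)) has_real_derivative D (x + \<tau> *\<^sub>R axis i 1)) (at \<tau>)"
proof -
  have "((\<lambda>t. G ((x + \<tau> *\<^sub>R axis i 1) + t *\<^sub>R axis i 1)) has_real_derivative D (x + \<tau> *\<^sub>R axis i 1)) (at 0)"
    by (rule assms)
  then have "((\<lambda>t. G (x + (t + \<tau>) *\<^sub>R axis i 1)) has_real_derivative D (x + \<tau> *\<^sub>R axis i 1)) (at 0)"
    by (simp add: algebra_simps scaleR_add_left)
  then show ?thesis
    using DERIV_shift[of "\<lambda>t. G (x + t *\<^sub>R axis i 1)" _ 0 \<tau>] by simp
qed

text \<open>The difference quotients of \<open>G\<close> all integrate to \<open>0\<close> by translation invariance, and they
  converge uniformly to the partial derivative \<open>D\<close>.\<close>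

lemma has_integral_partial_derivative_zero:
  fixes G D :: "real^'n \<Rightarrow> real"
  assumes der: "\<And>x. ((\<lambda>t. G (x + t *\<^sub>R axis i 1)) has_real_derivative D x) (at 0)"
    and cont_G: "continuous_on UNIV G" and cont_D: "continuous_on UNIV D"
    and G_zero: "\<And>x. x \<notin> cball c R \<Longrightarrow> G x = 0"
    and D_zero: "\<And>x. x \<notin> cball c R \<Longrightarrow> D x = 0"
  shows "(D has_integral 0) UNIV"
proof -
  let ?e = "axis i (1::real) :: real^'n"
  define IG where "IG = integral (cball c R) G"
  define ID where "ID = integral (cball c R) D"
  obtain a where box: "cball c (R + 1) \<subseteq> cbox (-a) a"
    using bounded_subset_cbox_symmetric[OF bounded_cball] by blast
  let ?B = "cbox (-a) a"
  have shift: "((\<lambda>x. G (x + t *\<^sub>R ?e)) has_integral IG) UNIV" for t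
    unfolding IG_def by (rule has_integral_shift_compact_support[OF cont_G G_zero])
  have int_D: "(D has_integral ID) UNIV"
    unfolding ID_def
    by (rule has_integral_cball_superset[OF continuous_on_subset[OF cont_D] D_zero]) auto
  have "norm ID \<le> \<epsilon> * Henstock_Kurzweil_Integration.content ?B" if "\<epsilon> > 0" for \<epsilon>
  proof -
    obtain d where d: "d > 0" and close: "\<And>x x'. dist x' x < d \<Longrightarrow> dist (D x') (D x) < \<epsilon>"
      using uniformly_continuous_on_compact_support[OF cont_D D_zero] \<open>\<epsilon> > 0\<close>
      unfolding uniformly_continuous_on_def by (metis UNIV_I)
    define t where "t = min (d/2) 1"
    have t: "t > 0" "t < d" "t \<le> 1" using d by (auto simp: t_def)
    define Q where "Q = (\<lambda>x. (G (x + t *\<^sub>R ?e) - G x) / t - D x)"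
    have int_G: "(G has_integral IG) UNIV"
      using shift[of 0] by simp
    have "(Q has_integral ((IG - IG) / t - ID)) UNIV"
      unfolding Q_def by (rule has_integral_diff[OF has_integral_divide[OF has_integral_diff[OF shift int_G]] int_D])
    moreover have Q_zero: "Q x = 0" if "x \<notin> ?B" for x
    proof -
      have "x \<notin> cball c (R + 1)" using that box by blast
      moreover have "dist c x \<le> dist c (x + t *\<^sub>R ?e) + dist (x + t *\<^sub>R ?e) x"
        by (rule dist_triangle)
      moreover have "dist (x + t *\<^sub>R ?e) x = t" using t by (simp add: dist_norm)
      ultimately have "x \<notin> cball c R" "x + t *\<^sub>R ?e \<notin> cball c R" using t by simp_all
      then show ?thesis unfolding Q_def using G_zero D_zero by simp
    qed
    moreover have "(\<lambda>x. if x \<in> ?B then Q x else 0) = Q"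
      using Q_zero by auto
    ultimately have "(Q has_integral - ID) ?B"
      using has_integral_restrict_UNIV[of ?B Q "- ID"] by simp
    moreover have "norm (Q x) \<le> \<epsilon>" for x
    proof -
      obtain z where z: "0 < z" "z < t" "G (x + t *\<^sub>R ?e) - G (x + 0 *\<^sub>R ?e) = (t - 0) * D (x + z *\<^sub>R ?e)"
        using MVT2[of 0 t "\<lambda>s. G (x + s *\<^sub>R ?e)" "\<lambda>s. D (x + s *\<^sub>R ?e)"]
          has_real_derivative_along_axis[OF der] t(1) by blast
      then have "Q x = D (x + z *\<^sub>R ?e) - D x" unfolding Q_def using t(1) by simp
      moreover have "dist (x + z *\<^sub>R ?e) x < d" using z t by (simp add: dist_norm)
      ultimately show ?thesis using close by (simp add: dist_real_def less_imp_le)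
    qed
    ultimately show ?thesis
      using has_integral_bound[of \<epsilon> Q "- ID" "-a" a] \<open>\<epsilon> > 0\<close> by simp
  qed
  then have "norm ID \<le> 0"
    by (intro nonpos_if_le_epsilon_mult[of "Henstock_Kurzweil_Integration.content ?B"]) auto
  then show ?thesis using int_D by simp
qed

lemma has_integral_laplacian_radial_zero:
  fixes x0 :: "real^'n"
  assumes F: "\<And>z. (F has_real_derivative P z) (at z)"
    and P: "\<And>z. (P has_real_derivative P2 z) (at z)"
    and P2: "continuous_on UNIV P2"
    and F_zero: "\<And>z. z \<ge> r^2 \<Longrightarrow> F z = 0"
    and P_zero: "\<And>z. z \<ge> r^2 \<Longrightarrow> P z = 0"
    and P2_zero: "\<And>z. z \<ge> r^2 \<Longrightarrow> P2 z = 0"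
    and r: "r > 0" "cball x0 r \<subseteq> ball 0 1"
  shows "(laplacian (\<lambda>x. F ((x - x0) \<bullet> (x - x0))) has_integral 0) UNIV"
proof -
  let ?\<phi> = "\<lambda>x. F ((x - x0) \<bullet> (x - x0))"
  have test: "test_fun ?\<phi>" using radial_test_fun(1)[OF F P P2 F_zero r] .
  have "(pd i (pd i ?\<phi>) has_integral 0) UNIV" for i
  proof (rule has_integral_partial_derivative_zero[where G = "pd i ?\<phi>" and c = x0 and R = r])
    fix x
    show "((\<lambda>t. pd i ?\<phi> (x + t *\<^sub>R axis i 1)) has_real_derivative pd i (pd i ?\<phi>) x) (at 0)"
      using has_real_derivative_radial_coordinate[OF P, of "x - x0" i i]
      unfolding pd_radial[OF F] pd_pd_radial[OF P] add_scaleR_minus_commute by simp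
  next
    show "continuous_on UNIV (pd i ?\<phi>)" "continuous_on UNIV (pd i (pd i ?\<phi>))"
      using test unfolding test_fun_def by blast+
  next
    fix x assume "x \<notin> cball x0 r"
    then have "(x - x0) \<bullet> (x - x0) \<ge> r^2" using inner_diff_gt_if_notin_cball[OF _ r(1)] less_imp_le by blast
    then show "pd i ?\<phi> x = 0" "pd i (pd i ?\<phi>) x = 0"
      unfolding pd_radial[OF F] pd_pd_radial[OF P] using P_zero P2_zero by auto
  qed
  then have "((\<lambda>x. \<Sum>i\<in>UNIV. pd i (pd i ?\<phi>) x) has_integral (\<Sum>i\<in>(UNIV::'n set). 0)) UNIV"
    by (intro has_integral_sum) auto
  then show ?thesis unfolding laplacian_def[abs_def] by simp
qed

section \<open>The radial profile\<close>

lemma has_real_derivative_at_interior: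
  assumes "(f has_real_derivative D) (at z within {a..b})" "a < z" "z < (b::real)"
  shows "(f has_real_derivative D) (at z)"
proof -
  have "z \<in> interior {a..b}" using assms by simp
  then show ?thesis using assms(1) at_within_interior by metis
qed

lemma has_integral_powr_interval:
  fixes \<alpha> c z :: real
  assumes \<alpha>: "\<alpha> > 0" and c: "0 < c" "c \<le> z"
  shows "((\<lambda>t. t powr (\<alpha> - 1)) has_integral (z powr \<alpha> - c powr \<alpha>) / \<alpha>) {c..z}"
proof -
  have "((\<lambda>t. t powr (\<alpha> - 1)) has_integral (z powr \<alpha> / \<alpha> - c powr \<alpha> / \<alpha>)) {c..z}"
  proof (rule fundamental_theorem_of_calculus[OF c(2)])
    fix x assume "x \<in> {c..z}"
    then have "x > 0" using c by auto
    have "((\<lambda>x. x powr \<alpha> / \<alpha>) has_real_derivative x powr (\<alpha> - 1)) (at x)"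
      using DERIV_cdivide[OF has_real_derivative_powr[OF \<open>x > 0\<close>, of \<alpha>], of \<alpha>] \<alpha> by simp
    then show "((\<lambda>x. x powr \<alpha> / \<alpha>) has_vector_derivative x powr (\<alpha> - 1)) (at x within {c..z})"
      by (simp add: has_real_derivative_iff_has_vector_derivative has_vector_derivative_at_within)
  qed
  then show ?thesis by (simp add: diff_divide_distrib)
qed

text \<open>The Euler equation \<open>4 \<alpha> P + 4 z P' = R\<close> is \<open>(z\<^sup>\<alpha> P)' = z\<^sup>\<alpha>\<^sup>-\<^sup>1 R / 4\<close>.\<close>

lemma has_real_derivative_euler_solution:
  fixes \<alpha> c Q0 z :: real and R :: "real \<Rightarrow> real"
  assumes cont_R: "continuous_on UNIV R" and c: "0 < c" "c < z"
  defines "P \<equiv> \<lambda>z. z powr (-\<alpha>) * (Q0 + integral {c..z} (\<lambda>t. t powr (\<alpha> - 1) * R t)) / 4"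
  shows "(P has_real_derivative (R z - 4 * \<alpha> * P z) / (4 * z)) (at z)"
proof -
  define Q where "Q = (\<lambda>z. Q0 + integral {c..z} (\<lambda>t. t powr (\<alpha> - 1) * R t))"
  have z: "z > 0" using c by simp
  have cont: "continuous_on {c..e} (\<lambda>t. t powr (\<alpha> - 1) * R t)" for e
    using c by (intro continuous_intros continuous_on_subset[OF cont_R]) auto
  have "((\<lambda>x. integral {c..x} (\<lambda>t. t powr (\<alpha> - 1) * R t)) has_real_derivative z powr (\<alpha> - 1) * R z)
      (at z within {c..z + 1})"
    using integral_has_real_derivative[OF cont, of z] c by simp
  then have "((\<lambda>x. integral {c..x} (\<lambda>t. t powr (\<alpha> - 1) * R t)) has_real_derivative z powr (\<alpha> - 1) * R z) (at z)"
    using c by (intro has_real_derivative_at_interior) auto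
  then have "(Q has_real_derivative z powr (\<alpha> - 1) * R z) (at z)"
    unfolding Q_def by (auto intro!: derivative_eq_intros)
  then have deriv: "((\<lambda>z. z powr (-\<alpha>) * Q z / 4) has_real_derivative
      ((-\<alpha>) * z powr (-\<alpha> - 1) * Q z + z powr (-\<alpha>) * (z powr (\<alpha> - 1) * R z)) / 4) (at z)"
    using has_real_derivative_powr[OF z, of "-\<alpha>"] z by (auto intro!: derivative_eq_intros)
  have "z powr (-\<alpha>) * z powr (\<alpha> - 1) = z powr (-\<alpha> + (\<alpha> - 1))"
    by (rule powr_add[symmetric])
  then have "z powr (-\<alpha>) * z powr (\<alpha> - 1) = 1 / z"
    using z by (simp add: powr_minus_divide)
  then have eq: "((-\<alpha>) * z powr (-\<alpha> - 1) * Q z + z powr (-\<alpha>) * (z powr (\<alpha> - 1) * R z)) / 4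
      = (R z - 4 * \<alpha> * (z powr (-\<alpha>) * Q z / 4)) / (4 * z)"
    using z by (simp add: powr_diff field_simps)
  have "P = (\<lambda>z. z powr (-\<alpha>) * Q z / 4)"
    unfolding P_def Q_def ..
  then show ?thesis
    using deriv[unfolded eq] by simp
qed

text \<open>Near \<open>0\<close>, where \<open>R\<close> is constant, we take the constant solution; it is the only one that
  stays bounded.\<close>

lemma euler_ode_solution:
  fixes \<alpha> c b R0 :: real and R :: "real \<Rightarrow> real"
  assumes \<alpha>: "\<alpha> > 0" and c: "0 < c" "c < b"
    and cont_R: "continuous_on UNIV R" and R_const: "\<And>z. z \<le> b \<Longrightarrow> R z = R0"
  obtains P P2 where
    "\<And>z. (P has_real_derivative P2 z) (at z)" "continuous_on UNIV P2"
    "\<And>z. 4 * \<alpha> * P z + 4 * z * P2 z = R z"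
    "\<And>z. z \<le> c \<Longrightarrow> P z = R0 / (4 * \<alpha>)"
    "\<And>z. z > c \<Longrightarrow> P z = z powr (-\<alpha>) * (R0 * c powr \<alpha> / \<alpha> + integral {c..z} (\<lambda>t. t powr (\<alpha> - 1) * R t)) / 4"
proof -
  define P_large where
    "P_large = (\<lambda>z. z powr (-\<alpha>) * (R0 * c powr \<alpha> / \<alpha> + integral {c..z} (\<lambda>t. t powr (\<alpha> - 1) * R t)) / 4)"
  define P where "P = (\<lambda>z. if z \<le> c then R0 / (4 * \<alpha>) else P_large z)"
  define P2 where "P2 = (\<lambda>z. if z \<le> c then 0 else (R z - 4 * \<alpha> * P z) / (4 * z))"
  have P_small: "P z = R0 / (4 * \<alpha>)" if "z \<le> b" for z
  proof (cases "z \<le> c")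
    case False
    then have z: "z > 0" using c by simp
    have "integral {c..z} (\<lambda>t. t powr (\<alpha> - 1) * R t) = integral {c..z} (\<lambda>t. R0 * t powr (\<alpha> - 1))"
      using R_const that by (intro integral_cong) auto
    also have "\<dots> = R0 * ((z powr \<alpha> - c powr \<alpha>) / \<alpha>)"
      using integral_unique[OF has_integral_powr_interval[OF \<alpha> c(1)]] False by simp
    finally have "R0 * c powr \<alpha> / \<alpha> + integral {c..z} (\<lambda>t. t powr (\<alpha> - 1) * R t) = R0 * z powr \<alpha> / \<alpha>"
      by (simp add: diff_divide_distrib right_diff_distrib)
    then have "P z = z powr (-\<alpha>) * (R0 * z powr \<alpha> / \<alpha>) / 4"
      using False by (simp add: P_def P_large_def)
    also have "\<dots> = R0 * (z powr (-\<alpha>) * z powr \<alpha>) / (4 * \<alpha>)"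
      by (simp add: field_simps)
    also have "z powr (-\<alpha>) * z powr \<alpha> = 1" using z by (simp add: powr_add[symmetric])
    finally show ?thesis by simp
  qed (simp add: P_def)
  have P_der: "(P has_real_derivative P2 z) (at z)" for z
  proof (cases "z > c")
    case True
    have "(P_large has_real_derivative (R z - 4 * \<alpha> * P_large z) / (4 * z)) (at z)"
      unfolding P_large_def by (rule has_real_derivative_euler_solution[OF cont_R c(1) True])
    moreover have "P2 z = (R z - 4 * \<alpha> * P_large z) / (4 * z)"
      using True by (simp add: P2_def P_def)
    ultimately have "(P_large has_real_derivative P2 z) (at z)" by simp
    then show ?thesis
      by (rule has_field_derivative_transform_within_open[of _ _ _ "{c<..}"]) (use True in \<open>auto simp: P_def\<close>)
  next
    case False
    have "((\<lambda>_. R0 / (4 * \<alpha>)) has_real_derivative 0) (at z)" by simp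
    then have "(P has_real_derivative 0) (at z)"
      by (rule has_field_derivative_transform_within_open[of _ _ _ "{..<b}"])
         (use False c P_small in auto)
    then show ?thesis using False by (simp add: P2_def)
  qed
  have cont_P: "continuous_on UNIV P"
    using P_der by (meson DERIV_isCont continuous_at_imp_continuous_on)
  have "isCont P2 z" for z
  proof (cases "z > c")
    case True
    have "continuous_on {c<..} (\<lambda>z. (R z - 4 * \<alpha> * P z) / (4 * z))"
      using c by (intro continuous_intros continuous_on_subset[OF cont_R] continuous_on_subset[OF cont_P]) auto
    then have "continuous_on {c<..} P2" by (rule continuous_on_eq) (simp add: P2_def)
    then show ?thesis using True continuous_on_eq_continuous_at[of "{c<..}" P2] by simp
  next
    case False
    have "P2 x = 0" if "x \<in> {..<b}" for x
      using that R_const[of x] P_small[of x] \<alpha> by (auto simp: P2_def)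
    then have "continuous_on {..<b} P2"
      using continuous_on_const[of "{..<b}" 0] continuous_on_eq by metis
    then show ?thesis using False c continuous_on_eq_continuous_at[of "{..<b}" P2] by simp
  qed
  then have "continuous_on UNIV P2" by (simp add: continuous_at_imp_continuous_on)
  moreover have "4 * \<alpha> * P z + 4 * z * P2 z = R z" for z
    using P_small[of z] R_const[of z] c \<alpha> by (cases "z > c") (auto simp: P2_def)
  ultimately show ?thesis
    using that[of P P2] P_der P_small c by (auto simp: P_def P_large_def)
qed

lemma vanishing_antiderivative:
  fixes P :: "real \<Rightarrow> real"
  assumes cont_P: "continuous_on UNIV P" and P_nonpos: "\<And>z. P z \<le> 0"
    and P_zero: "\<And>z. z \<ge> b \<Longrightarrow> P z = 0"
  obtains F where "\<And>z. (F has_real_derivative P z) (at z)" "\<And>z. F z \<ge> 0" "\<And>z. z \<ge> b \<Longrightarrow> F z = 0"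
proof -
  define F where "F = (\<lambda>z. - integral {z..b + 1} P)"
  have F_zero: "F z = 0" if "z \<ge> b" for z
  proof -
    have "integral {z..b + 1} P = integral {z..b + 1} (\<lambda>_. 0)"
      using that P_zero by (intro integral_cong) auto
    then show ?thesis by (simp add: F_def)
  qed
  have "F z \<ge> 0" for z
  proof -
    have "integral {z..b + 1} P \<le> integral {z..b + 1} (\<lambda>_. 0)"
      using P_nonpos continuous_on_subset[OF cont_P] by (intro integral_le integrable_continuous_real) auto
    then show ?thesis by (simp add: F_def)
  qed
  moreover have "(F has_real_derivative P z) (at z)" for z
  proof (cases "z > b")
    case True
    have "((\<lambda>_. 0) has_real_derivative 0) (at z)" by simp
    then have "(F has_real_derivative 0) (at z)"
      by (rule has_field_derivative_transform_within_open[of _ _ _ "{b<..}"]) (use True F_zero in auto)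
    then show ?thesis using P_zero[of z] True by simp
  next
    case False
    have "((\<lambda>x. integral {x..b + 1} P) has_real_derivative - P z) (at z within {z - 1..b + 1})"
      using integral_has_real_derivative'[OF continuous_on_subset[OF cont_P], of "z - 1" "b + 1" z] False by auto
    then have "((\<lambda>x. integral {x..b + 1} P) has_real_derivative - P z) (at z)"
      using False by (intro has_real_derivative_at_interior) auto
    then show ?thesis unfolding F_def using DERIV_minus by fastforce
  qed
  ultimately show ?thesis using that F_zero by blast
qed

text \<open>Profiles in the variable \<open>z = |x - x\<^sub>0|\<^sup>2\<close> of the radial test functions.\<close>

definition plateau :: "real \<Rightarrow> real \<Rightarrow> real" where
  "plateau s z = min 1 (max 0 (2 - 2 * z / s^2))"

definition annulus_bump :: "real \<Rightarrow> real \<Rightarrow> real \<Rightarrow> real" where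
  "annulus_bump r1 r z = max 0 ((z - r1^2) * (r^2 - z))"

lemma plateau_nonneg: "plateau s z \<ge> 0"
  by (simp add: plateau_def)

lemma plateau_eq_1:
  assumes "s \<noteq> 0" "z \<le> s^2 / 2"
  shows "plateau s z = 1"
proof -
  have "2 * z / s^2 \<le> 1" using assms by (simp add: divide_le_eq)
  then show ?thesis by (simp add: plateau_def)
qed

lemma plateau_eq_0: "s \<noteq> 0 \<Longrightarrow> z \<ge> s^2 \<Longrightarrow> plateau s z = 0"
  by (simp add: plateau_def field_simps)

lemma continuous_on_plateau [continuous_intros]:
  "s \<noteq> 0 \<Longrightarrow> continuous_on A f \<Longrightarrow> continuous_on A (\<lambda>x. plateau s (f x))"
  unfolding plateau_def by (intro continuous_intros) auto

lemma annulus_bump_nonneg: "annulus_bump r1 r z \<ge> 0"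
  by (simp add: annulus_bump_def)

lemma annulus_bump_eq_0:
  assumes "r1^2 \<le> r^2" "z \<le> r1^2 \<or> z \<ge> r^2"
  shows "annulus_bump r1 r z = 0"
proof -
  have "(z - r1^2) * (r^2 - z) \<le> 0"
    using assms by (auto intro: mult_nonpos_nonneg mult_nonneg_nonpos)
  then show ?thesis by (simp add: annulus_bump_def)
qed

lemma annulus_bump_pos: "r1^2 < z \<Longrightarrow> z < r^2 \<Longrightarrow> annulus_bump r1 r z > 0"
  by (simp add: annulus_bump_def)

lemma continuous_on_annulus_bump [continuous_intros]:
  "continuous_on A f \<Longrightarrow> continuous_on A (\<lambda>x. annulus_bump r1 r (f x))"
  unfolding annulus_bump_def by (intro continuous_intros)

lemma primitive_nonpos_if_sign_change:
  fixes h :: "real \<Rightarrow> real" and Q0 c m e z :: real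
  assumes int: "\<And>x y. c \<le> x \<Longrightarrow> h integrable_on {x..y}"
    and "Q0 \<le> 0" and cme: "c \<le> m" "m \<le> e"
    and neg: "\<And>t. c \<le> t \<Longrightarrow> t \<le> m \<Longrightarrow> h t \<le> 0" and pos: "\<And>t. m \<le> t \<Longrightarrow> t \<le> e \<Longrightarrow> h t \<ge> 0"
    and zero: "\<And>t. e \<le> t \<Longrightarrow> h t = 0"
    and balanced: "Q0 + integral {c..e} h = 0"
  shows primitive_nonpos: "c \<le> z \<Longrightarrow> Q0 + integral {c..z} h \<le> 0"
    and primitive_zero: "e \<le> z \<Longrightarrow> Q0 + integral {c..z} h = 0"
proof -
  show zero_after: "Q0 + integral {c..z} h = 0" if "e \<le> z" for z
  proof -
    have "integral {e..z} h = integral {e..z} (\<lambda>_. 0)"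
      using zero by (intro integral_cong) auto
    moreover have "integral {c..z} h = integral {c..e} h + integral {e..z} h"
      using Henstock_Kurzweil_Integration.integral_combine[OF _ that int] cme by simp
    ultimately show ?thesis using balanced by simp
  qed
  assume "c \<le> z"
  consider "z \<le> m" | "m < z" "z \<le> e" | "e < z" by linarith
  then show "Q0 + integral {c..z} h \<le> 0"
  proof cases
    case 1
    then have "integral {c..z} h \<le> integral {c..z} (\<lambda>_. 0)"
      using neg int \<open>c \<le> z\<close> by (intro integral_le) auto
    then show ?thesis using \<open>Q0 \<le> 0\<close> by simp
  next
    case 2
    have "integral {c..z} h + integral {z..e} h = integral {c..e} h"
      using Henstock_Kurzweil_Integration.integral_combine[OF \<open>c \<le> z\<close> 2(2) int] by simp
    moreover have "integral {z..e} h \<ge> 0"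
      using pos int[of z e] 2 cme \<open>c \<le> z\<close> by (intro Henstock_Kurzweil_Integration.integral_nonneg) auto
    ultimately show ?thesis using balanced by simp
  qed (use zero_after in simp)
qed

text \<open>The weight \<open>a\<close> of the plateau is chosen so that the primitive of the source
  \<open>annulus_bump - a \<cdot> plateau\<close> in the Euler-equation form returns to \<open>0\<close> at \<open>z = r\<^sup>2\<close>.\<close>

lemma balanced_radial_source:
  fixes \<alpha> c s r1 r :: real
  assumes \<alpha>: "\<alpha> > 0" and c: "0 < c" "c \<le> r1^2" and s: "0 < s" "s < r1" "r1 < r"
  obtains a where "a \<ge> 0"
    "\<And>z. z \<ge> c \<Longrightarrow> - a * c powr \<alpha> / \<alpha>
       + integral {c..z} (\<lambda>t. t powr (\<alpha> - 1) * (annulus_bump r1 r t - a * plateau s t)) \<le> 0"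
    "\<And>z. z \<ge> r^2 \<Longrightarrow> - a * c powr \<alpha> / \<alpha>
       + integral {c..z} (\<lambda>t. t powr (\<alpha> - 1) * (annulus_bump r1 r t - a * plateau s t)) = 0"
proof -
  define w where "w = (\<lambda>z::real. z powr (\<alpha> - 1))"
  define A where "A = c powr \<alpha> / \<alpha> + integral {c..r^2} (\<lambda>z. w z * plateau s z)"
  define B where "B = integral {c..r^2} (\<lambda>z. w z * annulus_bump r1 r z)"
  define a where "a = B / A"
  define R where "R = (\<lambda>z. annulus_bump r1 r z - a * plateau s z)"
  have sr: "0 < s^2" "s^2 < r1^2" "r1^2 < r^2" using s by (auto intro: power_strict_mono)
  have w_pos: "w z > 0" if "z > 0" for z using that by (simp add: w_def)
  have int: "(\<lambda>t. w t * h t) integrable_on {x..y}" if "continuous_on UNIV h" "c \<le> x" for h x y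
  proof -
    have "continuous_on {x..y} w"
      unfolding w_def using c that(2) by (intro continuous_intros) auto
    then show ?thesis
      by (intro integrable_continuous_real continuous_on_mult continuous_on_subset[OF that(1)]) auto
  qed
  have int_plateau: "(\<lambda>t. w t * plateau s t) integrable_on {c..r^2}"
    by (rule int) (use s in \<open>auto intro: continuous_intros\<close>)
  have int_bump: "(\<lambda>t. w t * annulus_bump r1 r t) integrable_on {c..r^2}"
    by (rule int) (auto intro: continuous_intros)
  have "A > 0"
  proof -
    have "w z * plateau s z \<ge> 0" if "z \<in> {c..r^2}" for z
      using that c w_pos[of z] plateau_nonneg[of s z] by simp
    then have "integral {c..r^2} (\<lambda>z. w z * plateau s z) \<ge> 0"
      using int_plateau by (intro Henstock_Kurzweil_Integration.integral_nonneg) auto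
    moreover have "c powr \<alpha> / \<alpha> > 0" using c \<alpha> by simp
    ultimately show ?thesis by (simp add: A_def)
  qed
  moreover have "B \<ge> 0"
  proof -
    have "w z * annulus_bump r1 r z \<ge> 0" if "z \<in> {c..r^2}" for z
      using that c w_pos[of z] annulus_bump_nonneg[of r1 r z] by simp
    then show ?thesis
      unfolding B_def using int_bump by (intro Henstock_Kurzweil_Integration.integral_nonneg) auto
  qed
  ultimately have a: "a \<ge> 0" by (simp add: a_def)
  have "integral {c..r^2} (\<lambda>t. w t * R t)
      = integral {c..r^2} (\<lambda>t. w t * annulus_bump r1 r t - a * (w t * plateau s t))"
    by (intro integral_cong) (simp add: R_def algebra_simps)
  also have "\<dots> = B - a * integral {c..r^2} (\<lambda>t. w t * plateau s t)"
    unfolding B_def using integral_diff[OF int_bump integrable_on_cmult_left[OF int_plateau, of a]] by simp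
  finally have balanced: "- a * c powr \<alpha> / \<alpha> + integral {c..r^2} (\<lambda>t. w t * R t) = 0"
    using \<open>A > 0\<close> unfolding A_def a_def by (simp add: field_simps)
  have "continuous_on UNIV R"
    unfolding R_def using s by (intro continuous_intros) auto
  moreover have "- a * c powr \<alpha> / \<alpha> \<le> 0" using a \<alpha> by simp
  moreover have "w t * R t \<le> 0" if "c \<le> t" "t \<le> r1^2" for t
    using that c sr annulus_bump_eq_0[of r1 r t] a plateau_nonneg[of s t] w_pos[of t]
    by (simp add: R_def mult_nonneg_nonpos)
  moreover have "w t * R t \<ge> 0" if "r1^2 \<le> t" for t
    using that c sr annulus_bump_nonneg[of r1 r t] plateau_eq_0[of s t] w_pos[of t] s
    by (simp add: R_def)
  moreover have "w t * R t = 0" if "r^2 \<le> t" for t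
    using that sr s annulus_bump_eq_0[of r1 r t] plateau_eq_0[of s t] by (simp add: R_def)
  ultimately have sign: "c \<le> z \<Longrightarrow> - a * c powr \<alpha> / \<alpha> + integral {c..z} (\<lambda>t. w t * R t) \<le> 0"
      "r^2 \<le> z \<Longrightarrow> - a * c powr \<alpha> / \<alpha> + integral {c..z} (\<lambda>t. w t * R t) = 0" for z
    using primitive_nonpos_if_sign_change[of c "\<lambda>t. w t * R t", OF int _ c(2) less_imp_le[OF sr(3)]] balanced
    by blast+
  show ?thesis
    by (rule that[OF a]) (use sign[unfolded R_def w_def] in blast)+
qed

lemma radial_profile:
  fixes n s r1 r :: real
  assumes n: "n > 0" and s: "0 < s" "s < r1" "r1 < r"
  obtains F P P2 a where
    "\<And>z. (F has_real_derivative P z) (at z)" "\<And>z. (P has_real_derivative P2 z) (at z)"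
    "continuous_on UNIV P2" "\<And>z. F z \<ge> 0" "a \<ge> 0"
    "\<And>z. 2 * n * P z + 4 * z * P2 z = annulus_bump r1 r z - a * plateau s z"
    "\<And>z. z \<ge> r^2 \<Longrightarrow> F z = 0" "\<And>z. z \<ge> r^2 \<Longrightarrow> P z = 0" "\<And>z. z \<ge> r^2 \<Longrightarrow> P2 z = 0"
proof -
  define \<alpha> where "\<alpha> = n / 2"
  define c where "c = s^2 / 4"
  have \<alpha>: "\<alpha> > 0" using n by (simp add: \<alpha>_def)
  have sr: "0 < s^2" "s^2 < r1^2" "r1^2 < r^2" using s by (auto intro: power_strict_mono)
  have c: "0 < c" "c < s^2 / 2" "c \<le> r1^2" using sr unfolding c_def by linarith+
  obtain a where a: "a \<ge> 0"
    and Q_le: "\<And>z. z \<ge> c \<Longrightarrow> - a * c powr \<alpha> / \<alpha>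
       + integral {c..z} (\<lambda>t. t powr (\<alpha> - 1) * (annulus_bump r1 r t - a * plateau s t)) \<le> 0"
    and Q_zero: "\<And>z. z \<ge> r^2 \<Longrightarrow> - a * c powr \<alpha> / \<alpha>
       + integral {c..z} (\<lambda>t. t powr (\<alpha> - 1) * (annulus_bump r1 r t - a * plateau s t)) = 0"
    by (fact balanced_radial_source[OF \<alpha> c(1) c(3) s])
  define R where "R = (\<lambda>z. annulus_bump r1 r z - a * plateau s z)"
  have cont_R: "continuous_on UNIV R"
    unfolding R_def using s by (intro continuous_intros) auto
  have R_const: "R z = - a" if "z \<le> s^2 / 2" for z
  proof -
    have "z \<le> r1^2" using that sr by linarith
    then show ?thesis
      using that s annulus_bump_eq_0[OF less_imp_le[OF sr(3)]] plateau_eq_1[of s z] by (simp add: R_def)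
  qed
  obtain P P2 where P_der: "\<And>z. (P has_real_derivative P2 z) (at z)" and cont_P2: "continuous_on UNIV P2"
    and ode: "\<And>z. 4 * \<alpha> * P z + 4 * z * P2 z = R z"
    and P_small: "\<And>z. z \<le> c \<Longrightarrow> P z = - a / (4 * \<alpha>)"
    and P_large: "\<And>z. z > c \<Longrightarrow> P z = z powr (-\<alpha>) * (- a * c powr \<alpha> / \<alpha>
       + integral {c..z} (\<lambda>t. t powr (\<alpha> - 1) * R t)) / 4"
    using euler_ode_solution[OF \<alpha> c(1,2) cont_R, of "- a"] R_const by blast
  have P_nonpos: "P z \<le> 0" for z
  proof (cases "z \<le> c")
    case False
    then have "- a * c powr \<alpha> / \<alpha> + integral {c..z} (\<lambda>t. t powr (\<alpha> - 1) * R t) \<le> 0"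
      using Q_le[of z] by (simp add: R_def)
    then have "z powr (-\<alpha>) * (- a * c powr \<alpha> / \<alpha> + integral {c..z} (\<lambda>t. t powr (\<alpha> - 1) * R t)) / 4 \<le> 0"
      by (intro divide_nonpos_pos mult_nonneg_nonpos) auto
    then show ?thesis
      using P_large[of z] False by simp
  qed (use P_small a \<alpha> in simp)
  have P_zero: "P z = 0" if "z \<ge> r^2" for z
    using that c sr P_large[of z] Q_zero[of z] by (simp add: R_def)
  have P2_zero: "P2 z = 0" if "z \<ge> r^2" for z
  proof -
    have "R z = 0"
      using that sr s annulus_bump_eq_0[OF less_imp_le[OF sr(3)]] plateau_eq_0[of s z] by (simp add: R_def)
    then have "4 * z * P2 z = 0" using ode[of z] P_zero[OF that] by simp
    then show ?thesis using that sr by simp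
  qed
  have "continuous_on UNIV P"
    using P_der by (meson DERIV_isCont continuous_at_imp_continuous_on)
  then obtain F where F_der: "\<And>z. (F has_real_derivative P z) (at z)"
    and F_nonneg: "\<And>z. F z \<ge> 0" and F_zero: "\<And>z. z \<ge> r^2 \<Longrightarrow> F z = 0"
    using vanishing_antiderivative[of P "r^2"] P_nonpos P_zero by blast
  have "2 * n * P z + 4 * z * P2 z = annulus_bump r1 r z - a * plateau s z" for z
    using ode[of z] by (simp add: \<alpha>_def R_def)
  from that[OF F_der P_der cont_P2 F_nonneg a this F_zero P_zero P2_zero] show ?thesis .
qed

section \<open>The weak maximum principle\<close>

text \<open>Test functions are supported in the unit ball, so integrating over it loses nothing.\<close>

definition weakly_subharmonic :: "(real^'n::finite) set \<Rightarrow> (real^'n \<Rightarrow> real) \<Rightarrow> bool" where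
  "weakly_subharmonic U w \<longleftrightarrow>
     (\<forall>\<phi>. test_fun \<phi> \<longrightarrow> (\<forall>x. \<phi> x \<ge> 0) \<longrightarrow> closure {x. \<phi> x \<noteq> 0} \<subseteq> U \<longrightarrow>
        integral (ball 0 1) (\<lambda>x. w x * laplacian \<phi> x) \<ge> 0)"

lemma weakly_subharmonicD:
  "weakly_subharmonic U w \<Longrightarrow> test_fun \<phi> \<Longrightarrow> (\<And>x. \<phi> x \<ge> 0) \<Longrightarrow> closure {x. \<phi> x \<noteq> 0} \<subseteq> U \<Longrightarrow>
     integral (ball 0 1) (\<lambda>x. w x * laplacian \<phi> x) \<ge> 0"
  unfolding weakly_subharmonic_def by blast

lemma weakly_subharmonic_subset:
  "weakly_subharmonic U w \<Longrightarrow> V \<subseteq> U \<Longrightarrow> weakly_subharmonic V w"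
  unfolding weakly_subharmonic_def by blast

lemma exists_radial_test_fun:
  fixes x0 :: "real^'n"
  assumes r: "r > 0" "cball x0 r \<subseteq> ball 0 1" and s: "0 < s" "s < r / 2"
  obtains \<phi> a where "test_fun \<phi>" "\<And>x. \<phi> x \<ge> 0" "closure {x. \<phi> x \<noteq> 0} \<subseteq> cball x0 r" "a \<ge> 0"
    "\<And>x. laplacian \<phi> x = annulus_bump (r/2) r ((x - x0) \<bullet> (x - x0)) - a * plateau s ((x - x0) \<bullet> (x - x0))"
    "(laplacian \<phi> has_integral 0) UNIV"
proof -
  have n: "real CARD('n) > 0" and half: "r / 2 < r" using r(1) by simp_all
  obtain F P P2 a where F: "\<And>z. (F has_real_derivative P z) (at z)"
    and P: "\<And>z. (P has_real_derivative P2 z) (at z)" and cont_P2: "continuous_on UNIV P2"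
    and F_nonneg: "\<And>z. F z \<ge> 0" and a: "a \<ge> 0"
    and ode: "\<And>z. 2 * real CARD('n) * P z + 4 * z * P2 z = annulus_bump (r/2) r z - a * plateau s z"
    and F_zero: "\<And>z. z \<ge> r^2 \<Longrightarrow> F z = 0" and P_zero: "\<And>z. z \<ge> r^2 \<Longrightarrow> P z = 0"
    and P2_zero: "\<And>z. z \<ge> r^2 \<Longrightarrow> P2 z = 0"
    by (fact radial_profile[OF n s half])
  have "(laplacian (\<lambda>x. F ((x - x0) \<bullet> (x - x0))) has_integral 0) UNIV"
    by (rule has_integral_laplacian_radial_zero[OF F P cont_P2 F_zero P_zero P2_zero r])
  moreover have "laplacian (\<lambda>x. F ((x - x0) \<bullet> (x - x0))) x
      = annulus_bump (r/2) r ((x - x0) \<bullet> (x - x0)) - a * plateau s ((x - x0) \<bullet> (x - x0))" for x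
    unfolding laplacian_radial[OF F P] ode ..
  ultimately show ?thesis
    using that[of "\<lambda>x. F ((x - x0) \<bullet> (x - x0))" a] radial_test_fun[OF F P cont_P2 F_zero r] F_nonneg a
    by blast
qed

text \<open>Testing against the radial function whose Laplacian is \<open>annulus_bump - a \<cdot> plateau\<close>
  compares averages of \<open>w\<close> over the annulus with averages near the centre.\<close>

lemma weakly_subharmonic_radial_inequality:
  fixes w :: "real^'n \<Rightarrow> real" and x0 :: "real^'n"
  assumes r: "r > 0" "cball x0 r \<subseteq> ball 0 1" and s: "0 < s" "s < r / 2"
    and cont_w: "continuous_on (cball x0 r) w"
    and sub: "weakly_subharmonic (cball x0 r) w"
  obtains a where "a \<ge> 0"
    "integral (cball x0 r) (\<lambda>x. annulus_bump (r/2) r ((x - x0) \<bullet> (x - x0)))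
       = a * integral (cball x0 r) (\<lambda>x. plateau s ((x - x0) \<bullet> (x - x0)))"
    "integral (cball x0 r) (\<lambda>x. (M - w x) * annulus_bump (r/2) r ((x - x0) \<bullet> (x - x0)))
       \<le> a * integral (cball x0 r) (\<lambda>x. (M - w x) * plateau s ((x - x0) \<bullet> (x - x0)))"
proof -
  let ?K = "cball x0 r"
  define \<rho> where "\<rho> = (\<lambda>x::real^'n. (x - x0) \<bullet> (x - x0))"
  obtain \<phi> a where test: "test_fun \<phi>" and \<phi>_nonneg: "\<And>x. \<phi> x \<ge> 0"
    and support: "closure {x. \<phi> x \<noteq> 0} \<subseteq> ?K" and a: "a \<ge> 0"
    and lap: "\<And>x. laplacian \<phi> x = annulus_bump (r/2) r (\<rho> x) - a * plateau s (\<rho> x)"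
    and lap_zero: "(laplacian \<phi> has_integral 0) UNIV"
    unfolding \<rho>_def by (fact exists_radial_test_fun[OF r s])
  let ?L = "laplacian \<phi>"
  have cont_L: "continuous_on UNIV ?L" by (rule continuous_on_laplacian[OF test])
  have L_zero: "?L x = 0" if "x \<notin> ?K" for x
  proof -
    have "\<rho> x \<ge> r^2" unfolding \<rho>_def using inner_diff_gt_if_notin_cball[OF that r(1)] by simp
    moreover have "s^2 \<le> r^2" "(r/2)^2 \<le> r^2" using s r(1) by (simp_all add: power_mono)
    ultimately have "s^2 \<le> \<rho> x" "(r/2)^2 \<le> r^2" by linarith+
    then have "annulus_bump (r/2) r (\<rho> x) = 0" "plateau s (\<rho> x) = 0"
      using annulus_bump_eq_0[of "r/2" r "\<rho> x"] plateau_eq_0[of s "\<rho> x"] s \<open>\<rho> x \<ge> r^2\<close> by auto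
    then show ?thesis unfolding lap by simp
  qed
  have int_K: "h integrable_on ?K" if "continuous_on ?K h" for h :: "real^'n \<Rightarrow> real"
    using integrable_continuous_compact[OF compact_cball that] .
  have cont_plateau: "continuous_on ?K (\<lambda>x. plateau s (\<rho> x))"
    and cont_bump: "continuous_on ?K (\<lambda>x. annulus_bump (r/2) r (\<rho> x))"
    unfolding \<rho>_def using s by (auto intro!: continuous_intros)
  have "(?L has_integral integral ?K ?L) UNIV"
    by (rule has_integral_cball_superset[OF continuous_on_subset[OF cont_L] L_zero]) auto
  then have integral_L: "integral ?K ?L = 0" using lap_zero has_integral_unique by blast
  show ?thesis
  proof (rule that[OF a])
    show "integral ?K (\<lambda>x. annulus_bump (r/2) r ((x - x0) \<bullet> (x - x0)))
       = a * integral ?K (\<lambda>x. plateau s ((x - x0) \<bullet> (x - x0)))"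
      using integral_L integral_diff[OF int_K[OF cont_bump] integrable_on_cmult_left[OF int_K[OF cont_plateau]]]
      unfolding lap by (simp add: \<rho>_def)
    have "integral (ball 0 1) (\<lambda>x. w x * ?L x) \<ge> 0"
      by (rule weakly_subharmonicD[OF sub test \<phi>_nonneg support])
    moreover have cont_wL: "continuous_on ?K (\<lambda>x. w x * ?L x)"
      by (intro continuous_intros cont_w continuous_on_subset[OF cont_L]) auto
    then have "((\<lambda>x. w x * ?L x) has_integral integral ?K (\<lambda>x. w x * ?L x)) (ball 0 1)"
      by (rule has_integral_cball_superset) (use L_zero r(2) in auto)
    ultimately have wL: "integral ?K (\<lambda>x. w x * ?L x) \<ge> 0" using integral_unique by metis
    have "(\<lambda>x. (M - w x) * annulus_bump (r/2) r (\<rho> x))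
        = (\<lambda>x. M * ?L x - w x * ?L x + a * ((M - w x) * plateau s (\<rho> x)))"
      by (auto simp: lap algebra_simps)
    moreover have "integral ?K (\<lambda>x. M * ?L x - w x * ?L x + a * ((M - w x) * plateau s (\<rho> x)))
        = M * integral ?K ?L - integral ?K (\<lambda>x. w x * ?L x) + a * integral ?K (\<lambda>x. (M - w x) * plateau s (\<rho> x))"
    proof -
      have int_L: "?L integrable_on ?K" by (rule int_K[OF continuous_on_subset[OF cont_L]]) simp
      have int_g: "(\<lambda>x. (M - w x) * plateau s (\<rho> x)) integrable_on ?K"
        by (intro int_K continuous_intros cont_w cont_plateau)
      show ?thesis
        using integral_add[OF integrable_diff[OF integrable_on_cmult_left[OF int_L, of M] int_K[OF cont_wL]]
            integrable_on_cmult_left[OF int_g, of a]]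
          integral_diff[OF integrable_on_cmult_left[OF int_L, of M] int_K[OF cont_wL]]
        by simp
    qed
    ultimately show "integral ?K (\<lambda>x. (M - w x) * annulus_bump (r/2) r ((x - x0) \<bullet> (x - x0)))
       \<le> a * integral ?K (\<lambda>x. (M - w x) * plateau s ((x - x0) \<bullet> (x - x0)))"
      using integral_L wL by (simp add: \<rho>_def)
  qed
qed

text \<open>Shrinking the plateau to the modulus of continuity of \<open>w\<close> at the centre makes the
  right-hand side of the radial inequality small.\<close>

lemma weakly_subharmonic_annulus_deficit_small:
  fixes w :: "real^'n \<Rightarrow> real" and x0 :: "real^'n"
  assumes r: "r > 0" "cball x0 r \<subseteq> ball 0 1"
    and cont_w: "continuous_on (cball x0 r) w" and sub: "weakly_subharmonic (cball x0 r) w"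
    and "\<eta> > 0"
  shows "integral (cball x0 r) (\<lambda>x. (w x0 - w x) * annulus_bump (r/2) r ((x - x0) \<bullet> (x - x0)))
    \<le> \<eta> * integral (cball x0 r) (\<lambda>x. annulus_bump (r/2) r ((x - x0) \<bullet> (x - x0)))"
proof -
  let ?K = "cball x0 r"
  define \<rho> where "\<rho> = (\<lambda>x::real^'n. (x - x0) \<bullet> (x - x0))"
  have "x0 \<in> ?K" using r(1) by simp
  with cont_w \<open>\<eta> > 0\<close> have "\<exists>\<delta>>0. \<forall>y\<in>?K. dist y x0 < \<delta> \<longrightarrow> dist (w y) (w x0) < \<eta>"
    unfolding continuous_on_iff by blast
  then obtain \<delta> where "\<delta> > 0" and \<delta>: "\<And>y. y \<in> ?K \<Longrightarrow> dist y x0 < \<delta> \<Longrightarrow> dist (w y) (w x0) < \<eta>"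
    by blast
  define s where "s = min \<delta> (r/4)"
  have s: "0 < s" "s < r/2" "s \<le> \<delta>" using \<open>\<delta> > 0\<close> r by (auto simp: s_def)
  obtain a where a: "a \<ge> 0"
    and balance: "integral ?K (\<lambda>x. annulus_bump (r/2) r (\<rho> x)) = a * integral ?K (\<lambda>x. plateau s (\<rho> x))"
    and ineq: "integral ?K (\<lambda>x. (w x0 - w x) * annulus_bump (r/2) r (\<rho> x))
       \<le> a * integral ?K (\<lambda>x. (w x0 - w x) * plateau s (\<rho> x))"
    unfolding \<rho>_def by (fact weakly_subharmonic_radial_inequality[OF r s(1,2) cont_w sub])
  have cont_plateau: "continuous_on ?K (\<lambda>x. plateau s (\<rho> x))"
    unfolding \<rho>_def using s by (intro continuous_intros) auto
  have "(w x0 - w x) * plateau s (\<rho> x) \<le> \<eta> * plateau s (\<rho> x)" if "x \<in> ?K" for x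
  proof (cases "dist x x0 < s")
    case True
    then have "w x0 - w x \<le> \<eta>" using \<delta>[OF that] s by (simp add: dist_real_def)
    then show ?thesis using plateau_nonneg by (rule mult_right_mono)
  next
    case False
    then have "\<rho> x \<ge> s^2" using s by (simp add: \<rho>_def dist_norm power2_norm_eq_inner[symmetric] power_mono)
    then show ?thesis using plateau_eq_0 s by simp
  qed
  then have "integral ?K (\<lambda>x. (w x0 - w x) * plateau s (\<rho> x)) \<le> integral ?K (\<lambda>x. \<eta> * plateau s (\<rho> x))"
    by (intro integral_le integrable_continuous_compact compact_cball continuous_intros cont_w cont_plateau)
  then have "integral ?K (\<lambda>x. (w x0 - w x) * plateau s (\<rho> x)) \<le> \<eta> * integral ?K (\<lambda>x. plateau s (\<rho> x))"
    by simp
  with ineq a have "integral ?K (\<lambda>x. (w x0 - w x) * annulus_bump (r/2) r (\<rho> x))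
      \<le> a * (\<eta> * integral ?K (\<lambda>x. plateau s (\<rho> x)))"
    by (meson mult_left_mono order_trans)
  also have "\<dots> = \<eta> * integral ?K (\<lambda>x. annulus_bump (r/2) r (\<rho> x))"
    using balance by simp
  finally show ?thesis unfolding \<rho>_def .
qed

lemma weakly_subharmonic_max_on_annulus:
  fixes w :: "real^'n \<Rightarrow> real" and x0 :: "real^'n"
  assumes r: "r > 0" "cball x0 r \<subseteq> ball 0 1"
    and cont_w: "continuous_on (cball x0 r) w" and sub: "weakly_subharmonic (cball x0 r) w"
    and le_max: "\<And>y. y \<in> cball x0 r \<Longrightarrow> w y \<le> w x0"
    and y: "r/2 < dist y x0" "dist y x0 < r"
  shows "w y = w x0"
proof -
  let ?K = "cball x0 r"
  define \<rho> where "\<rho> = (\<lambda>x::real^'n. (x - x0) \<bullet> (x - x0))"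
  define h where "h = (\<lambda>x. (w x0 - w x) * annulus_bump (r/2) r (\<rho> x))"
  have cont_bump: "continuous_on ?K (\<lambda>x. annulus_bump (r/2) r (\<rho> x))"
    unfolding \<rho>_def by (intro continuous_intros)
  have cont_h: "continuous_on ?K h"
    unfolding h_def by (intro continuous_intros cont_w cont_bump)
  have h_nonneg: "h x \<ge> 0" if "x \<in> ?K" for x
    using le_max[OF that] annulus_bump_nonneg unfolding h_def by simp
  have "integral ?K (\<lambda>x. annulus_bump (r/2) r (\<rho> x)) \<ge> 0"
    using annulus_bump_nonneg
    by (intro Henstock_Kurzweil_Integration.integral_nonneg integrable_continuous_compact compact_cball cont_bump)
  then have "integral ?K h \<le> 0"
    using weakly_subharmonic_annulus_deficit_small[OF r cont_w sub] unfolding h_def \<rho>_def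
    by (rule nonpos_if_le_epsilon_mult)
  moreover have "integral ?K h \<ge> 0"
    using h_nonneg
    by (intro Henstock_Kurzweil_Integration.integral_nonneg integrable_continuous_compact compact_cball cont_h)
  ultimately have "h y = 0"
    using integral_eq_0_imp_eq_0_ball[OF cont_h h_nonneg, of y] y by (simp add: dist_commute)
  moreover have "annulus_bump (r/2) r (\<rho> y) > 0"
  proof -
    have "(r/2)^2 < dist y x0 ^ 2" "dist y x0 ^ 2 < r^2"
      using y r(1) by (auto intro: power_strict_mono)
    moreover have "\<rho> y = dist y x0 ^ 2"
      by (simp add: \<rho>_def dist_norm power2_norm_eq_inner)
    ultimately show ?thesis by (simp add: annulus_bump_pos)
  qed
  ultimately show ?thesis unfolding h_def by simp
qed

lemma exists_unit_vector_norm_add: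
  fixes x0 :: "'a::euclidean_space"
  obtains u where "norm u = 1" "\<And>t. t \<ge> 0 \<Longrightarrow> norm (x0 + t *\<^sub>R u) = norm x0 + t"
proof (cases "x0 = 0")
  case True
  obtain b :: 'a where "b \<in> Basis" using nonempty_Basis by blast
  then show ?thesis using that[of b] True by simp
next
  case False
  show ?thesis
  proof
    show "norm (x0 /\<^sub>R norm x0) = 1" using False by simp
    fix t :: real assume "t \<ge> 0"
    have "x0 + t *\<^sub>R (x0 /\<^sub>R norm x0) = (1 + t / norm x0) *\<^sub>R x0"
      by (simp add: algebra_simps divide_inverse)
    then show "norm (x0 + t *\<^sub>R (x0 /\<^sub>R norm x0)) = norm x0 + t"
      using \<open>t \<ge> 0\<close> False by (simp add: field_simps)
  qed
qed

text \<open>Among the points of \<open>closure U\<close> where \<open>w\<close> attains its positive maximum pick one farthest from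
  the origin; it lies in \<open>U\<close>, and by the annulus lemma \<open>w\<close> is maximal at points even farther out.\<close>

lemma weak_maximum_principle:
  fixes w :: "real^'n \<Rightarrow> real" and U :: "(real^'n) set"
  assumes U: "open U" "U \<subseteq> ball 0 1" and cont_w: "continuous_on (closure U) w"
    and boundary: "\<And>x. x \<in> closure U \<Longrightarrow> x \<notin> U \<Longrightarrow> w x \<le> 0"
    and sub: "weakly_subharmonic U w" and x: "x \<in> U"
  shows "w x \<le> 0"
proof (rule ccontr)
  assume "\<not> w x \<le> 0"
  have compact_U: "compact (closure U)"
    using bounded_subset[OF bounded_ball U(2)] by (simp add: compact_closure)
  have "x \<in> closure U" using x closure_subset by blast
  then have "closure U \<noteq> {}" by auto
  then obtain xm where xm: "xm \<in> closure U" and max: "\<And>y. y \<in> closure U \<Longrightarrow> w y \<le> w xm"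
    using continuous_attains_sup[OF compact_U _ cont_w] by auto
  have pos: "w xm > 0" using max[OF \<open>x \<in> closure U\<close>] \<open>\<not> w x \<le> 0\<close> by simp
  define S where "S = closure U \<inter> w -` {w xm}"
  have "closed S"
    unfolding S_def by (rule continuous_closed_preimage[OF cont_w closed_closure closed_singleton])
  then have "compact S"
    using compact_Int_closed[OF compact_U] by (metis S_def Int_assoc Int_absorb)
  moreover have "S \<noteq> {}" using xm by (auto simp: S_def)
  ultimately obtain x0 where "x0 \<in> S" and farthest: "\<And>y. y \<in> S \<Longrightarrow> norm y \<le> norm x0"
    using continuous_attains_sup[OF _ _ continuous_on_norm_id, of S] by auto
  then have x0_max: "x0 \<in> closure U" "w x0 = w xm" by (auto simp: S_def)
  then have "x0 \<in> U" using boundary pos by fastforce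
  then obtain r where r: "r > 0" "cball x0 r \<subseteq> U" using U(1) open_contains_cball by blast
  have in_closure: "cball x0 r \<subseteq> closure U" using r(2) closure_subset by blast
  obtain u where u: "norm u = 1" "\<And>t. t \<ge> 0 \<Longrightarrow> norm (x0 + t *\<^sub>R u) = norm x0 + t"
    by (fact exists_unit_vector_norm_add[of x0])
  define y where "y = x0 + (3 * r / 4) *\<^sub>R u"
  have dist_y: "dist y x0 = 3 * r / 4" using u(1) r(1) by (simp add: y_def dist_norm)
  then have "y \<in> cball x0 r" using r(1) by (simp add: dist_commute)
  have "w y = w x0"
  proof (rule weakly_subharmonic_max_on_annulus)
    show "cball x0 r \<subseteq> ball 0 1" using r(2) U(2) by blast
    show "continuous_on (cball x0 r) w" using continuous_on_subset[OF cont_w in_closure] .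
    show "weakly_subharmonic (cball x0 r) w" using weakly_subharmonic_subset[OF sub r(2)] .
    show "w z \<le> w x0" if "z \<in> cball x0 r" for z
      using max[OF subsetD[OF in_closure that]] x0_max(2) by simp
  qed (use r(1) dist_y in auto)
  then have "y \<in> S" using subsetD[OF in_closure \<open>y \<in> cball x0 r\<close>] x0_max(2) by (simp add: S_def)
  then have "norm y \<le> norm x0" by (rule farthest)
  moreover have "norm y = norm x0 + 3 * r / 4" using u(2)[of "3 * r / 4"] r(1) by (simp add: y_def)
  ultimately show False using r(1) by simp
qed

lemma weak_maximum_principle_positive_part:
  fixes w :: "real^'n \<Rightarrow> real" and W :: "(real^'n) set"
  assumes W: "open W" "W \<subseteq> ball 0 1" and cont_w: "continuous_on (closure W) w"
    and boundary: "\<And>x. x \<in> closure W \<Longrightarrow> x \<notin> W \<Longrightarrow> w x \<le> 0"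
    and sub: "weakly_subharmonic {x \<in> W. w x > 0} w" and x: "x \<in> W"
  shows "w x \<le> 0"
proof (cases "w x > 0")
  case True
  let ?U = "{x \<in> W. w x > 0}"
  have "?U = W \<inter> w -` {0<..}" by auto
  then have "open ?U"
    using continuous_open_preimage[OF continuous_on_subset[OF cont_w closure_subset] W(1) open_greaterThan]
    by simp
  moreover have closure_U: "closure ?U \<subseteq> closure W" by (rule closure_mono) auto
  moreover have "w y \<le> 0" if "y \<in> closure ?U" "y \<notin> ?U" for y
  proof (cases "y \<in> W")
    case False
    then show ?thesis using boundary subsetD[OF closure_U that(1)] by simp
  qed (use that(2) in simp)
  moreover have "?U \<subseteq> ball 0 1" "x \<in> ?U" using W(2) x True by auto
  ultimately show ?thesis
    using weak_maximum_principle[OF _ _ continuous_on_subset[OF cont_w closure_U] _ sub] by blast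
qed simp

section \<open>Reflection in a coordinate hyperplane\<close>

lemma reflect_nth [simp]: "reflect k x $ i = (if i = k then - (x $ i) else x $ i)"
  by (simp add: reflect_def)

lemma reflect_reflect [simp]: "reflect k (reflect k x) = x"
  by (simp add: vec_eq_iff)

lemma reflect_fixed: "x $ k = 0 \<Longrightarrow> reflect k x = x"
  by (simp add: vec_eq_iff)

lemma reflect_add_axis:
  "reflect k (x + t *\<^sub>R axis j 1) = reflect k x + (if j = k then - t else t) *\<^sub>R axis j 1"
  by (simp add: vec_eq_iff axis_def)

lemma linear_reflect: "linear (reflect k)"
  by (auto simp: linear_iff vec_eq_iff)

lemma continuous_on_reflect: "continuous_on S (reflect k)"
  by (rule linear_continuous_on[OF linear_conv_bounded_linear[THEN iffD1, OF linear_reflect]])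

lemma norm_reflect [simp]: "norm (reflect k x) = norm x"
proof -
  have "reflect k x \<bullet> reflect k x = x \<bullet> x"
    unfolding inner_vec_def by (rule sum.cong) auto
  then show ?thesis by (simp add: norm_eq_sqrt_inner)
qed

lemma reflect_image_cbox:
  "reflect k ` cbox a b = cbox (\<chi> i. if i = k then - (b $ i) else a $ i) (\<chi> i. if i = k then - (a $ i) else b $ i)"
    (is "_ = cbox ?a ?b")
proof
  show "reflect k ` cbox a b \<subseteq> cbox ?a ?b"
    by (auto simp: mem_box_cart)
  show "cbox ?a ?b \<subseteq> reflect k ` cbox a b"
  proof
    fix x assume x: "x \<in> cbox ?a ?b"
    have "reflect k x \<in> cbox a b"
      unfolding mem_box_cart
    proof
      fix i
      from x have "?a $ i \<le> x $ i \<and> x $ i \<le> ?b $ i" unfolding mem_box_cart by blast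
      then show "a $ i \<le> reflect k x $ i \<and> reflect k x $ i \<le> b $ i" by (cases "i = k") auto
    qed
    then show "x \<in> reflect k ` cbox a b" using image_eqI[of x "reflect k" "reflect k x"] by simp
  qed
qed

lemma content_reflect_image_cbox:
  "Henstock_Kurzweil_Integration.content (reflect k ` cbox a b) = Henstock_Kurzweil_Integration.content (cbox a b)"
proof (cases "cbox a b = {}")
  case False
  let ?a = "(\<chi> i. if i = k then - (b $ i) else a $ i) :: real^'a"
  let ?b = "(\<chi> i. if i = k then - (a $ i) else b $ i) :: real^'a"
  have "cbox ?a ?b \<noteq> {}" using False reflect_image_cbox[of k a b] by auto
  then have "Henstock_Kurzweil_Integration.content (cbox ?a ?b) = (\<Prod>i\<in>UNIV. ?b $ i - ?a $ i)" by (rule content_cbox_cart)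
  also have "\<dots> = (\<Prod>i\<in>UNIV. b $ i - a $ i)" by (intro prod.cong) auto
  also have "\<dots> = Henstock_Kurzweil_Integration.content (cbox a b)" using content_cbox_cart[OF False] by simp
  finally show ?thesis by (simp add: reflect_image_cbox)
qed simp

text \<open>Reflection is a change of variables with Jacobian of modulus \<open>1\<close>.\<close>

lemma has_integral_reflect:
  fixes H :: "real^'n \<Rightarrow> real"
  assumes "(H has_integral I) S" "bounded S" and S: "\<And>x. reflect k x \<in> S \<longleftrightarrow> x \<in> S"
  shows "((\<lambda>x. H (reflect k x)) has_integral I) S"
proof -
  obtain a :: "real^'n" where a: "S \<subseteq> cbox (-a) a"
    using bounded_subset_cbox_symmetric[OF assms(2)] by blast
  define H' where "H' = (\<lambda>x. if x \<in> S then H x else 0)"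
  have "(H' has_integral I) (cbox (-a) a)"
    unfolding H'_def using has_integral_restrict[OF a] assms(1) by blast
  then have "((\<lambda>x. H' (reflect k x)) has_integral (1 / 1) *\<^sub>R I) (reflect k ` cbox (-a) a)"
  proof (rule has_integral_twiddle[where g = "reflect k" and h = "reflect k", rotated -1])
    show "continuous (at x) (reflect k)" for x
      using linear_continuous_at[OF linear_conv_bounded_linear[THEN iffD1, OF linear_reflect]] .
    show "\<exists>w z. reflect k ` cbox u v = cbox w z" for u v using reflect_image_cbox by blast
    then show "\<exists>w z. reflect k ` cbox u v = cbox w z" for u v .
    show "Henstock_Kurzweil_Integration.content (reflect k ` cbox u v) = 1 * Henstock_Kurzweil_Integration.content (cbox u v)" for u v
      using content_reflect_image_cbox by simp
  qed auto
  moreover have "(\<chi> i. if i = k then - (a $ i) else (-a) $ i) = -a" "(\<chi> i. if i = k then - ((-a) $ i) else a $ i) = a"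
    by (simp_all add: vec_eq_iff)
  then have "reflect k ` cbox (-a) a = cbox (-a) a"
    using reflect_image_cbox[of k "-a" a] by simp
  moreover have "(\<lambda>x. H' (reflect k x)) = (\<lambda>x. if x \<in> S then H (reflect k x) else 0)"
    by (auto simp: H'_def S)
  ultimately have "((\<lambda>x. if x \<in> S then H (reflect k x) else 0) has_integral I) (cbox (-a) a)"
    by simp
  then show ?thesis using has_integral_restrict[OF a, of "\<lambda>x. H (reflect k x)" I] by blast
qed

lemma integral_reflect:
  fixes H :: "real^'n \<Rightarrow> real"
  assumes "bounded S" and S: "\<And>x. reflect k x \<in> S \<longleftrightarrow> x \<in> S"
  shows "integral S (\<lambda>x. H (reflect k x)) = integral S H"
proof (cases "H integrable_on S")
  case True
  then show ?thesis using has_integral_reflect[OF integrable_integral assms] integral_unique by blast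
next
  case False
  have "\<not> (\<lambda>x. H (reflect k x)) integrable_on S"
  proof
    assume "(\<lambda>x. H (reflect k x)) integrable_on S"
    from has_integral_reflect[OF integrable_integral[OF this] assms]
    show False using False by auto
  qed
  then show ?thesis using False by (simp add: not_integrable_integral)
qed

lemma has_real_derivative_reflect_line:
  assumes "(\<lambda>t. g (reflect k x + t *\<^sub>R axis j 1)) differentiable (at 0)"
  shows "((\<lambda>t. g (reflect k (x + t *\<^sub>R axis j 1))) has_real_derivative
           (if j = k then - 1 else 1) * pd j g (reflect k x)) (at 0)"
proof -
  let ?\<sigma> = "if j = k then - 1 else 1 :: real"
  let ?h = "\<lambda>t. g (reflect k x + t *\<^sub>R axis j 1)"
  have "(?h has_real_derivative deriv ?h 0) (at 0)"
    using assms by (simp add: DERIV_deriv_iff_real_differentiable)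
  moreover have "((\<lambda>t. ?\<sigma> * t) has_real_derivative ?\<sigma>) (at 0)"
    by (auto intro!: derivative_eq_intros)
  ultimately have "((\<lambda>t. ?h (?\<sigma> * t)) has_real_derivative deriv ?h (?\<sigma> * 0) * ?\<sigma>) (at 0)"
    using DERIV_chain2[of ?h "deriv ?h 0" "\<lambda>t. ?\<sigma> * t" 0 ?\<sigma>] by simp
  moreover have "(\<lambda>t. g (reflect k (x + t *\<^sub>R axis j 1))) = (\<lambda>t. ?h (?\<sigma> * t))"
    by (auto simp: reflect_add_axis)
  moreover have "deriv ?h 0 = pd j g (reflect k x)" by (simp add: pd_def)
  ultimately show ?thesis by (simp add: mult.commute)
qed

lemma pd_reflect:
  assumes "\<And>y. (\<lambda>t. g (y + t *\<^sub>R axis j 1)) differentiable (at 0)"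
  shows "pd j (\<lambda>x. g (reflect k x)) = (\<lambda>x. (if j = k then - 1 else 1) * pd j g (reflect k x))"
proof
  fix x
  show "pd j (\<lambda>x. g (reflect k x)) x = (if j = k then - 1 else 1) * pd j g (reflect k x)"
    using DERIV_imp_deriv[OF has_real_derivative_reflect_line[OF assms[of "reflect k x"]]] by (simp add: pd_def)
qed

lemma differentiable_reflect_line:
  fixes g :: "real^'n \<Rightarrow> real"
  assumes "\<And>y. (\<lambda>t. g (y + t *\<^sub>R axis j 1)) differentiable (at 0)"
  shows "(\<lambda>t. g (reflect k (x + t *\<^sub>R axis j 1))) differentiable (at 0)"
  using has_real_derivative_reflect_line[OF assms[of "reflect k x"]] real_differentiable_def by blast

lemma pd_cmult:
  fixes f :: "real^'n \<Rightarrow> real"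
  assumes "(\<lambda>t. f (x + t *\<^sub>R axis j 1)) differentiable (at 0)"
  shows "pd j (\<lambda>x. c * f x) x = c * pd j f x"
proof -
  obtain D where D: "((\<lambda>t. f (x + t *\<^sub>R axis j 1)) has_real_derivative D) (at 0)"
    using assms real_differentiable_def by blast
  then have "((\<lambda>t. c * f (x + t *\<^sub>R axis j 1)) has_real_derivative c * D) (at 0)"
    by (rule DERIV_cmult)
  then show ?thesis using D by (simp add: pd_def DERIV_imp_deriv)
qed

lemma pd_pd_reflect:
  fixes \<psi> :: "real^'n \<Rightarrow> real"
  assumes "test_fun \<psi>"
  shows "pd j (pd i (\<lambda>x. \<psi> (reflect k x))) x
     = (if i = k then - 1 else 1) * ((if j = k then - 1 else 1) * pd j (pd i \<psi>) (reflect k x))"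
proof -
  have diff: "\<And>y. (\<lambda>t. \<psi> (y + t *\<^sub>R axis i 1)) differentiable (at 0)"
    and diff_pd: "\<And>y. (\<lambda>t. pd i \<psi> (y + t *\<^sub>R axis j 1)) differentiable (at 0)"
    using assms unfolding test_fun_def by blast+
  from diff have "pd i (\<lambda>x. \<psi> (reflect k x)) = (\<lambda>x. (if i = k then - 1 else 1) * pd i \<psi> (reflect k x))"
    by (rule pd_reflect)
  then show ?thesis
    using pd_cmult[OF differentiable_reflect_line[OF diff_pd]] pd_reflect[OF diff_pd] by simp
qed

lemma laplacian_reflect:
  "test_fun \<psi> \<Longrightarrow> laplacian (\<lambda>x. \<psi> (reflect k x)) x = laplacian \<psi> (reflect k x)"
  unfolding laplacian_def by (auto simp: pd_pd_reflect intro!: sum.cong)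

lemma test_fun_reflect:
  fixes \<psi> :: "real^'n \<Rightarrow> real"
  assumes "test_fun \<psi>"
  shows "test_fun (\<lambda>x. \<psi> (reflect k x))"
proof -
  have cont: "continuous_on UNIV \<psi>" "\<And>i. continuous_on UNIV (pd i \<psi>)"
      "\<And>i j. continuous_on UNIV (pd j (pd i \<psi>))"
    and diff: "\<And>i y. (\<lambda>t. \<psi> (y + t *\<^sub>R axis i 1)) differentiable (at 0)"
    and diff_pd: "\<And>i j y. (\<lambda>t. pd i \<psi> (y + t *\<^sub>R axis j 1)) differentiable (at 0)"
    and support: "compact (closure {x. \<psi> x \<noteq> 0})" "closure {x. \<psi> x \<noteq> 0} \<subseteq> ball 0 1"
    using assms unfolding test_fun_def by blast+
  have pd1: "pd i (\<lambda>x. \<psi> (reflect k x)) = (\<lambda>x. (if i = k then - 1 else 1) * pd i \<psi> (reflect k x))" for i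
    using diff by (rule pd_reflect)
  have compact_image: "compact (reflect k ` closure {x. \<psi> x \<noteq> 0})"
    by (rule compact_continuous_image[OF continuous_on_reflect support(1)])
  have reflect_support: "closure {x. \<psi> (reflect k x) \<noteq> 0} \<subseteq> reflect k ` closure {x. \<psi> x \<noteq> 0}"
  proof (rule closure_minimal)
    show "{x. \<psi> (reflect k x) \<noteq> 0} \<subseteq> reflect k ` closure {x. \<psi> x \<noteq> 0}"
      using closure_subset by (force intro: image_eqI[of _ "reflect k", OF reflect_reflect[symmetric]])
  qed (rule compact_imp_closed[OF compact_image])
  have cont_comp: "continuous_on UNIV (\<lambda>x. f (reflect k x))" if "continuous_on UNIV f" for f :: "real^'n \<Rightarrow> real"
    using continuous_on_compose[OF continuous_on_reflect continuous_on_subset[OF that]] by (simp add: o_def)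
  show ?thesis
    unfolding test_fun_def
  proof (intro conjI allI)
    show "continuous_on UNIV (\<lambda>x. \<psi> (reflect k x))" by (rule cont_comp[OF cont(1)])
    show "(\<lambda>t. \<psi> (reflect k (x + t *\<^sub>R axis i 1))) differentiable at 0" for i x
      using diff by (rule differentiable_reflect_line)
    show "continuous_on UNIV (pd i (\<lambda>x. \<psi> (reflect k x)))" for i
      unfolding pd1 by (intro continuous_intros cont_comp cont(2))
    show "(\<lambda>t. pd i (\<lambda>x. \<psi> (reflect k x)) (x + t *\<^sub>R axis j 1)) differentiable at 0" for i j x
      unfolding pd1 using differentiable_reflect_line[OF diff_pd] by simp
    show "continuous_on UNIV (pd j (pd i (\<lambda>x. \<psi> (reflect k x))))" for i j
      unfolding pd_pd_reflect[OF assms, abs_def] by (intro continuous_intros cont_comp cont(3))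
    show "compact (closure {x. \<psi> (reflect k x) \<noteq> 0})"
      using bounded_subset[OF compact_imp_bounded[OF compact_image] reflect_support]
      by (simp add: compact_eq_bounded_closed)
    have "reflect k ` ball 0 1 \<subseteq> ball 0 1" by auto
    then show "closure {x. \<psi> (reflect k x) \<noteq> 0} \<subseteq> ball 0 1"
      using reflect_support image_mono[OF support(2), of "reflect k"] by blast
  qed
qed

section \<open>Dirichlet solutions\<close>

lemma dirichlet_solution_continuous: "dirichlet_solution g f u \<Longrightarrow> continuous_on (cball 0 1) u"
  unfolding dirichlet_solution_def by blast

lemma dirichlet_solution_boundary: "dirichlet_solution g f u \<Longrightarrow> x \<in> sphere 0 1 \<Longrightarrow> u x = 0"
  unfolding dirichlet_solution_def by blast

lemma dirichlet_solution_weak: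
  "dirichlet_solution g f u \<Longrightarrow> test_fun \<phi> \<Longrightarrow>
     integral (ball 0 1) (\<lambda>x. u x * (- laplacian \<phi> x) + g (u x) * \<phi> x)
     = integral (ball 0 1) (\<lambda>x. f x * \<phi> x)"
  unfolding dirichlet_solution_def by blast

lemma weakly_subharmonic_if_weak_laplacian:
  fixes w h :: "real^'n \<Rightarrow> real"
  assumes weak: "\<And>\<phi>. test_fun \<phi> \<Longrightarrow>
      integral (ball 0 1) (\<lambda>x. w x * laplacian \<phi> x) = integral (ball 0 1) (\<lambda>x. h x * \<phi> x)"
    and cont_h: "continuous_on (cball 0 1) h" and h_nonneg: "\<And>x. x \<in> U \<Longrightarrow> x \<in> ball 0 1 \<Longrightarrow> h x \<ge> 0"
  shows "weakly_subharmonic U w"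
  unfolding weakly_subharmonic_def
proof (intro allI impI)
  fix \<phi> :: "real^'n \<Rightarrow> real"
  assume \<phi>: "test_fun \<phi>" and \<phi>_nonneg: "\<forall>x. \<phi> x \<ge> 0" and support: "closure {x. \<phi> x \<noteq> 0} \<subseteq> U"
  have "h x * \<phi> x \<ge> 0" if "x \<in> ball 0 1" for x
  proof (cases "\<phi> x = 0")
    case False
    then have "x \<in> U" using support closure_subset[of "{x. \<phi> x \<noteq> 0}"] by auto
    then show ?thesis using h_nonneg that \<phi>_nonneg by simp
  qed simp
  moreover have "continuous_on (cball 0 1) \<phi>"
    using continuous_on_subset[OF test_fun_continuous[OF \<phi>] subset_UNIV] .
  then have "(\<lambda>x. h x * \<phi> x) integrable_on ball 0 1"
    by (rule integrable_continuous_ball[OF continuous_on_mult[OF cont_h]])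
  ultimately have "integral (ball 0 1) (\<lambda>x. h x * \<phi> x) \<ge> 0"
    by (intro Henstock_Kurzweil_Integration.integral_nonneg) auto
  then show "integral (ball 0 1) (\<lambda>x. w x * laplacian \<phi> x) \<ge> 0"
    using weak[OF \<phi>] by simp
qed

lemma dirichlet_solution_weak_laplacian:
  fixes u f :: "real^'n \<Rightarrow> real"
  assumes u: "dirichlet_solution g f u" and cont_g: "continuous_on UNIV g"
    and cont_f: "continuous_on (cball 0 1) f" and \<phi>: "test_fun \<phi>"
  shows "integral (ball 0 1) (\<lambda>x. u x * laplacian \<phi> x) = integral (ball 0 1) (\<lambda>x. (g (u x) - f x) * \<phi> x)"
proof -
  define A where "A = (\<lambda>x. u x * (- laplacian \<phi> x) + g (u x) * \<phi> x)"
  have cont: "continuous_on (cball 0 1) u" "continuous_on (cball 0 1) (laplacian \<phi>)"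
      "continuous_on (cball 0 1) \<phi>" "continuous_on (cball 0 1) (\<lambda>x. g (u x))"
    using dirichlet_solution_continuous[OF u] continuous_on_laplacian[OF \<phi>] test_fun_continuous[OF \<phi>]
      continuous_on_compose2[OF cont_g dirichlet_solution_continuous[OF u]]
    by (auto intro: continuous_on_subset)
  have int_g: "(\<lambda>x. g (u x) * \<phi> x) integrable_on ball 0 1"
    by (rule integrable_continuous_ball[OF continuous_on_mult[OF cont(4,3)]])
  have int_f: "(\<lambda>x. f x * \<phi> x) integrable_on ball 0 1"
    by (rule integrable_continuous_ball[OF continuous_on_mult[OF cont_f cont(3)]])
  have int_A: "A integrable_on ball 0 1"
    unfolding A_def using cont
    by (intro integrable_continuous_ball continuous_on_add continuous_on_mult continuous_on_minus)
  have "integral (ball 0 1) (\<lambda>x. u x * laplacian \<phi> x) = integral (ball 0 1) (\<lambda>x. g (u x) * \<phi> x - A x)"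
    by (rule integral_cong) (simp add: A_def algebra_simps)
  also have "\<dots> = integral (ball 0 1) (\<lambda>x. g (u x) * \<phi> x) - integral (ball 0 1) (\<lambda>x. f x * \<phi> x)"
    using integral_diff[OF int_g int_A] dirichlet_solution_weak[OF u \<phi>] by (simp add: A_def)
  also have "\<dots> = integral (ball 0 1) (\<lambda>x. (g (u x) - f x) * \<phi> x)"
    using integral_diff[OF int_g int_f] by (simp add: algebra_simps)
  finally show ?thesis .
qed

lemma dirichlet_solution_weak_difference:
  fixes u v :: "real^'n \<Rightarrow> real"
  assumes u: "dirichlet_solution g1 f u" and v: "dirichlet_solution g2 f v"
    and cont_g: "continuous_on UNIV g1" "continuous_on UNIV g2" and \<phi>: "test_fun \<phi>"
  shows "integral (ball 0 1) (\<lambda>x. (u x - v x) * laplacian \<phi> x)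
       = integral (ball 0 1) (\<lambda>x. (g1 (u x) - g2 (v x)) * \<phi> x)"
proof -
  define Au where "Au = (\<lambda>x. u x * (- laplacian \<phi> x) + g1 (u x) * \<phi> x)"
  define Av where "Av = (\<lambda>x. v x * (- laplacian \<phi> x) + g2 (v x) * \<phi> x)"
  define G where "G = (\<lambda>x. (g1 (u x) - g2 (v x)) * \<phi> x)"
  have cont: "continuous_on (cball 0 1) u" "continuous_on (cball 0 1) v"
      "continuous_on (cball 0 1) (laplacian \<phi>)" "continuous_on (cball 0 1) \<phi>"
      "continuous_on (cball 0 1) (\<lambda>x. g1 (u x))" "continuous_on (cball 0 1) (\<lambda>x. g2 (v x))"
    using dirichlet_solution_continuous[OF u] dirichlet_solution_continuous[OF v]
      continuous_on_laplacian[OF \<phi>] test_fun_continuous[OF \<phi>]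
      continuous_on_compose2[OF cont_g(1) dirichlet_solution_continuous[OF u]]
      continuous_on_compose2[OF cont_g(2) dirichlet_solution_continuous[OF v]]
    by (auto intro: continuous_on_subset)
  have int: "Au integrable_on ball 0 1" "Av integrable_on ball 0 1" "G integrable_on ball 0 1"
    unfolding Au_def Av_def G_def using cont by (auto intro!: integrable_continuous_ball continuous_intros)
  have "integral (ball 0 1) Au = integral (ball 0 1) Av"
    using dirichlet_solution_weak[OF u \<phi>] dirichlet_solution_weak[OF v \<phi>] unfolding Au_def Av_def by simp
  moreover have "(\<lambda>x. (u x - v x) * laplacian \<phi> x) = (\<lambda>x. (Av x - Au x) + G x)"
    by (auto simp: Au_def Av_def G_def algebra_simps)
  ultimately show ?thesis
    using integral_add[OF integrable_diff[OF int(2,1)] int(3)] integral_diff[OF int(2,1)]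
    by (simp add: G_def)
qed

lemma closure_subset_cball: "U \<subseteq> ball 0 1 \<Longrightarrow> closure U \<subseteq> cball (0::'a::real_normed_vector) 1"
  using ball_subset_cball closure_minimal[OF _ closed_cball] by blast

lemma dirichlet_solution_comparison:
  fixes u v :: "real^'n \<Rightarrow> real"
  assumes u: "dirichlet_solution g1 f u" and v: "dirichlet_solution g2 f v"
    and cont_g: "continuous_on UNIV g1" "continuous_on UNIV g2"
    and W: "open W" "W \<subseteq> ball 0 1"
    and boundary: "\<And>y. y \<in> closure W \<Longrightarrow> y \<notin> W \<Longrightarrow> u y \<le> v y"
    and order: "\<And>y. y \<in> W \<Longrightarrow> u y > v y \<Longrightarrow> g2 (v y) \<le> g1 (u y)"
    and x: "x \<in> W"
  shows "u x \<le> v x"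
proof -
  have cont_uv: "continuous_on (cball 0 1) (\<lambda>y. u y - v y)"
    using dirichlet_solution_continuous[OF u] dirichlet_solution_continuous[OF v] by (intro continuous_intros)
  have "weakly_subharmonic {y \<in> W. u y - v y > 0} (\<lambda>y. u y - v y)"
    by (rule weakly_subharmonic_if_weak_laplacian[OF dirichlet_solution_weak_difference[OF u v cont_g]])
       (use order in \<open>auto intro!: continuous_intros cont_uv
          continuous_on_compose2[OF cont_g(1) dirichlet_solution_continuous[OF u]]
          continuous_on_compose2[OF cont_g(2) dirichlet_solution_continuous[OF v]]\<close>)
  then have "u x - v x \<le> 0"
    using weak_maximum_principle_positive_part[OF W continuous_on_subset[OF cont_uv closure_subset_cball[OF W(2)]]]
      boundary x by force
  then show ?thesis by simp
qed

lemma dirichlet_solution_unique: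
  assumes "dirichlet_solution g f u" "dirichlet_solution g f v" "continuous_on UNIV g" "mono g"
    and x: "x \<in> ball 0 1"
  shows "u x = v x"
proof -
  have "closure (ball 0 1) - ball 0 1 = sphere (0::real^'n) 1" by auto
  then have boundary: "w1 y \<le> w2 y"
    if "dirichlet_solution g f w1" "dirichlet_solution g f w2" "y \<in> closure (ball 0 1)" "y \<notin> ball 0 1"
    for w1 w2 y using that dirichlet_solution_boundary by (metis Diff_iff order_refl)
  show ?thesis
    using dirichlet_solution_comparison[OF assms(1,2) assms(3,3) open_ball order_refl boundary[OF assms(1,2)]]
      dirichlet_solution_comparison[OF assms(2,1) assms(3,3) open_ball order_refl boundary[OF assms(2,1)]]
      monoD[OF assms(4)] x by (meson less_imp_le order_antisym)
qed

lemma dirichlet_solution_reflect: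
  fixes u f :: "real^'n \<Rightarrow> real"
  assumes u: "dirichlet_solution g f u" and g_odd: "\<forall>s. g (- s) = - g s"
    and f_odd: "\<forall>x\<in>cball 0 1. f (reflect k x) = - f x"
  shows "dirichlet_solution g f (\<lambda>x. - u (reflect k x))"
  unfolding dirichlet_solution_def
proof (intro conjI allI impI ballI)
  have "continuous_on (cball 0 1) (\<lambda>x. u (reflect k x))"
    by (rule continuous_on_compose2[OF dirichlet_solution_continuous[OF u] continuous_on_reflect]) auto
  then show "continuous_on (cball 0 1) (\<lambda>x. - u (reflect k x))"
    by (rule continuous_on_minus)
  show "- u (reflect k x) = 0" if "x \<in> sphere 0 1" for x
    using dirichlet_solution_boundary[OF u] that by simp
next
  fix \<psi> :: "real^'n \<Rightarrow> real" assume \<psi>: "test_fun \<psi>"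
  have ball: "bounded (ball (0::real^'n) 1)" "\<And>x. reflect k x \<in> ball 0 1 \<longleftrightarrow> x \<in> ball 0 1"
    by auto
  define H where "H = (\<lambda>y. u y * (- laplacian \<psi> (reflect k y)) + g (u y) * \<psi> (reflect k y))"
  have "integral (ball 0 1) H = integral (ball 0 1) (\<lambda>x. f x * \<psi> (reflect k x))"
    using dirichlet_solution_weak[OF u test_fun_reflect[OF \<psi>]] unfolding H_def laplacian_reflect[OF \<psi>] .
  moreover have "integral (ball 0 1) (\<lambda>x. - u (reflect k x) * (- laplacian \<psi> x) + g (- u (reflect k x)) * \<psi> x)
      = integral (ball 0 1) (\<lambda>x. - H (reflect k x))"
    by (rule integral_cong) (simp add: H_def g_odd algebra_simps)
  moreover have "integral (ball 0 1) (\<lambda>x. f x * \<psi> (reflect k x))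
      = integral (ball 0 1) (\<lambda>x. f (reflect k x) * \<psi> x)"
    using integral_reflect[OF ball, of "\<lambda>x. f x * \<psi> (reflect k x)"] by simp
  moreover have "integral (ball 0 1) (\<lambda>x. f (reflect k x) * \<psi> x) = integral (ball 0 1) (\<lambda>x. - (f x * \<psi> x))"
    by (rule integral_cong) (use f_odd in auto)
  ultimately show "integral (ball 0 1) (\<lambda>x. - u (reflect k x) * (- laplacian \<psi> x) + g (- u (reflect k x)) * \<psi> x)
      = integral (ball 0 1) (\<lambda>x. f x * \<psi> x)"
    using integral_reflect[OF ball, of "\<lambda>x. - H x"] by simp
qed

lemma dirichlet_solution_odd:
  assumes u: "dirichlet_solution g f u" and "\<forall>s. g (- s) = - g s" "mono g" "continuous_on UNIV g"
    and "\<forall>x\<in>cball 0 1. f (reflect k x) = - f x" and x: "x \<in> cball 0 1"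
  shows "u (reflect k x) = - u x"
proof (cases "x \<in> ball 0 1")
  case True
  have "u x = - u (reflect k x)"
    by (rule dirichlet_solution_unique[OF u dirichlet_solution_reflect[OF u assms(2,5)] assms(4,3) True])
  then show ?thesis by simp
next
  case False
  then have "x \<in> sphere 0 1" using x by simp
  moreover have "reflect k x \<in> sphere 0 1" using calculation by simp
  ultimately show ?thesis using dirichlet_solution_boundary[OF u] by simp
qed

definition upper_half_ball :: "'n::finite \<Rightarrow> (real^'n) set" where
  "upper_half_ball k = {x \<in> ball 0 1. x $ k > 0}"

lemma open_upper_half_ball: "open (upper_half_ball (k::'n::finite))"
proof -
  have "open {x :: real^'n. 0 < x $ k}"
    by (rule open_Collect_less[OF continuous_on_const continuous_on_component[OF continuous_on_id]])
  moreover have "upper_half_ball k = ball 0 1 \<inter> {x. 0 < x $ k}"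
    by (auto simp: upper_half_ball_def)
  ultimately show ?thesis
    using open_Int[OF open_ball] by metis
qed

lemma upper_half_ball_subset: "upper_half_ball k \<subseteq> ball 0 1"
  by (auto simp: upper_half_ball_def)

lemma frontier_upper_half_ball:
  fixes k :: "'n::finite"
  assumes "y \<in> closure (upper_half_ball k)" "y \<notin> upper_half_ball k"
  shows "y \<in> sphere 0 1 \<or> (y \<in> cball 0 1 \<and> y $ k = 0)"
proof -
  have "closed (cball 0 1 \<inter> {x :: real^'n. 0 \<le> x $ k})"
    by (intro closed_Int closed_cball closed_Collect_le continuous_on_const continuous_on_component continuous_on_id)
  moreover have "upper_half_ball k \<subseteq> cball 0 1 \<inter> {x. 0 \<le> x $ k}"
    by (auto simp: upper_half_ball_def)
  ultimately have "y \<in> cball 0 1" "y $ k \<ge> 0"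
    using closure_minimal assms(1) by blast+
  then show ?thesis using assms(2) by (auto simp: upper_half_ball_def)
qed

lemma odd_dirichlet_solution_frontier_upper_half_ball:
  assumes u: "dirichlet_solution g f u" and odd: "\<And>x. x \<in> cball 0 1 \<Longrightarrow> u (reflect k x) = - u x"
    and y: "y \<in> closure (upper_half_ball k)" "y \<notin> upper_half_ball k"
  shows "u y = 0"
  using frontier_upper_half_ball[OF y]
proof
  assume "y \<in> cball 0 1 \<and> y $ k = 0"
  then show ?thesis using odd[of y] reflect_fixed[of y k] by simp
qed (rule dirichlet_solution_boundary[OF u])

text \<open>By the maximum principle applied to \<open>-u\<close> on the upper half ball: \<open>\<Delta>(-u) = f - g(u) \<ge> 0\<close>
  wherever \<open>u < 0\<close>.\<close>

lemma dirichlet_solution_nonneg_upper_half_ball: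
  fixes u f :: "real^'n \<Rightarrow> real"
  assumes u: "dirichlet_solution g f u" and g_odd: "\<forall>s. g (- s) = - g s"
    and "mono g" "continuous_on UNIV g"
    and cont_f: "continuous_on (cball 0 1) f" and f_nonneg: "\<forall>x\<in>ball 0 1. x $ k > 0 \<longrightarrow> f x \<ge> 0"
    and odd: "\<And>x. x \<in> cball 0 1 \<Longrightarrow> u (reflect k x) = - u x"
    and x: "x \<in> upper_half_ball k"
  shows "u x \<ge> 0"
proof -
  have "g 0 = 0" using g_odd[rule_format, of 0] by simp
  have cont_u: "continuous_on (cball 0 1) u" by (rule dirichlet_solution_continuous[OF u])
  have "weakly_subharmonic {y \<in> upper_half_ball k. - u y > 0} (\<lambda>y. - u y)"
  proof (rule weakly_subharmonic_if_weak_laplacian)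
    show "integral (ball 0 1) (\<lambda>x. - u x * laplacian \<phi> x) = integral (ball 0 1) (\<lambda>x. (f x - g (u x)) * \<phi> x)"
      if "test_fun \<phi>" for \<phi>
    proof -
      have "(\<lambda>x. - u x * laplacian \<phi> x) = (\<lambda>x. - (u x * laplacian \<phi> x))"
        "(\<lambda>x. (f x - g (u x)) * \<phi> x) = (\<lambda>x. - ((g (u x) - f x) * \<phi> x))"
        by (simp_all add: fun_eq_iff algebra_simps)
      then show ?thesis
        using dirichlet_solution_weak_laplacian[OF u assms(4) cont_f that] by (simp only: integral_neg)
    qed
    show "continuous_on (cball 0 1) (\<lambda>x. f x - g (u x))"
      using cont_f continuous_on_compose2[OF assms(4) cont_u] by (intro continuous_on_diff) auto
    show "f y - g (u y) \<ge> 0" if "y \<in> {y \<in> upper_half_ball k. - u y > 0}" for y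
      using that f_nonneg monoD[OF assms(3), of "u y" 0] \<open>g 0 = 0\<close> by (auto simp: upper_half_ball_def)
  qed
  then have "- u x \<le> 0"
    using weak_maximum_principle_positive_part[OF open_upper_half_ball upper_half_ball_subset
        continuous_on_subset[OF continuous_on_minus[OF cont_u] closure_subset_cball[OF upper_half_ball_subset]]]
      odd_dirichlet_solution_frontier_upper_half_ball[OF u odd] x by force
  then show ?thesis by simp
qed

lemma abs_le_abs_if_odd_and_le_on_upper_half_ball:
  fixes u1 u2 :: "real^'n \<Rightarrow> real"
  assumes odd: "\<And>x. x \<in> cball 0 1 \<Longrightarrow> u1 (reflect k x) = - u1 x"
      "\<And>x. x \<in> cball 0 1 \<Longrightarrow> u2 (reflect k x) = - u2 x"
    and half: "\<And>x. x \<in> upper_half_ball k \<Longrightarrow> 0 \<le> u2 x \<and> u2 x \<le> u1 x"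
    and x: "x \<in> ball 0 1"
  shows "\<bar>u2 x\<bar> \<le> \<bar>u1 x\<bar>"
proof -
  consider "x $ k > 0" | "x $ k < 0" | "x $ k = 0" by linarith
  then show ?thesis
  proof cases
    case 1
    then show ?thesis using half[of x] x by (simp add: upper_half_ball_def)
  next
    case 2
    then have "reflect k x \<in> upper_half_ball k" using x by (simp add: upper_half_ball_def)
    then show ?thesis using half[of "reflect k x"] odd[of x] x by simp
  next
    case 3
    then show ?thesis using odd[of x] reflect_fixed[of x k] x by simp
  qed
qed

theorem corollary2p2:
  fixes f :: "real^'n::finite \<Rightarrow> real"
    and k :: 'n
    and g1 g2 :: "real \<Rightarrow> real"
    and u1 u2 :: "real^'n \<Rightarrow> real"
  assumes N2: "CARD('n) \<ge> 2"
    and f_cont: "continuous_on (cball 0 1) f"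
    and f_odd: "\<forall>x\<in>cball 0 1. f (reflect k x) = - f x"
    and f_nonneg: "\<forall>x\<in>ball 0 1. x $ k > 0 \<longrightarrow> f x \<ge> 0"
    and g1_C1: "\<exists>g1'. continuous_on UNIV g1' \<and> (\<forall>s. (g1 has_real_derivative g1' s) (at s))"
    and g2_C1: "\<exists>g2'. continuous_on UNIV g2' \<and> (\<forall>s. (g2 has_real_derivative g2' s) (at s))"
    and g1_odd: "\<forall>s. g1 (- s) = - g1 s"
    and g2_odd: "\<forall>s. g2 (- s) = - g2 s"
    and g1_mono: "mono g1"
    and g2_mono: "mono g2"
    and g12: "\<forall>s\<ge>0. g1 s \<le> g2 s"
    and u1: "dirichlet_solution g1 f u1"
    and u2: "dirichlet_solution g2 f u2"
  shows "\<forall>x\<in>ball 0 1. \<bar>u1 x\<bar> \<ge> \<bar>u2 x\<bar>"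
proof
  fix x :: "real^'n" assume x: "x \<in> ball 0 1"
  have cont_g: "continuous_on UNIV g1" "continuous_on UNIV g2"
    using g1_C1 g2_C1 by (meson DERIV_isCont continuous_at_imp_continuous_on)+
  have odd1: "\<And>x. x \<in> cball 0 1 \<Longrightarrow> u1 (reflect k x) = - u1 x"
    by (rule dirichlet_solution_odd[OF u1 g1_odd g1_mono cont_g(1) f_odd])
  have odd2: "\<And>x. x \<in> cball 0 1 \<Longrightarrow> u2 (reflect k x) = - u2 x"
    by (rule dirichlet_solution_odd[OF u2 g2_odd g2_mono cont_g(2) f_odd])
  have nonneg2: "u2 y \<ge> 0" if "y \<in> upper_half_ball k" for y
    by (rule dirichlet_solution_nonneg_upper_half_ball[OF u2 g2_odd g2_mono cont_g(2) f_cont f_nonneg _ that])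
       (rule odd2)
  have "u2 y \<le> u1 y" if "y \<in> upper_half_ball k" for y
  proof (rule dirichlet_solution_comparison[OF u2 u1 cont_g(2,1) open_upper_half_ball upper_half_ball_subset _ _ that])
    show "u2 z \<le> u1 z" if "z \<in> closure (upper_half_ball k)" "z \<notin> upper_half_ball k" for z
      using odd_dirichlet_solution_frontier_upper_half_ball[OF u1 odd1 that]
        odd_dirichlet_solution_frontier_upper_half_ball[OF u2 odd2 that] by simp
    show "g1 (u1 z) \<le> g2 (u2 z)" if "z \<in> upper_half_ball k" "u2 z > u1 z" for z
    proof -
      have "g1 (u1 z) \<le> g1 (u2 z)" using that(2) by (intro monoD[OF g1_mono]) simp
      also have "\<dots> \<le> g2 (u2 z)" using g12 nonneg2[OF that(1)] by simp
      finally show ?thesis .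
    qed
  qed
  with nonneg2 show "\<bar>u1 x\<bar> \<ge> \<bar>u2 x\<bar>"
    by (intro abs_le_abs_if_odd_and_le_on_upper_half_ball[where k = k, OF _ _ _ x] odd1 odd2) simp_all
qed

end
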